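(* Let $X_1(0)=X_2(0)=\dots\in\mathbb{N}$ and $F_1=F_2=\dots=F$ with $\sum_{k}1/F(k)<\infty$. For $A\ge3$ consider the $A$-agent urn constructed from the birth processes $\Xi_1,\dots,\Xi_A$ and set $S(A)=\min_{i=3,\dots,A}T_i$. Then for all $s>0$ and all integers $x_2>X_2(0)$, $$\frac{\mathbb{P}_{A,2}\big(S(A)>s\mid X_2^{(A)}(\infty)\ge x_2\big)}{\mathbb{P}_{A,2}(S(A)>s)}\to\infty\quad\text{and}\quad \mathbb{P}_{A,2}\big(S(A)>s\mid X_2^{(A)}(\infty)\ge x_2\big)\to0\qquad\text{as }A\to\infty.$$
   Context: $\mathbb{N}=\{1,2,\dots\}$, $e^{(i)}$ the $i$-th unit vector. Let $\Xi_1,\Xi_2,\dots$ be independent pure birth processes: $\Xi_i$ has independent sojourn times $\tau_i(k)$, $k\ge X_i(0)$, exponential with rate $F_i(k)$, $\Xi_i(t)=\min\{k:\sum_{l=X_i(0)}^k\tau_i(l)>t\}$, and explosion time $T_i=\sum_{k\ge X_i(0)}\tau_i(k)$. For each $A$, with $\Xi^{(A)}=(\Xi_1,\dots,\Xi_A)$, $t_0=0$, $t_{n+1}=\inf\{t>t_n:\Xi^{(A)}(t)\ne\Xi^{(A)}(t_n)\}$, the urn is $X^{(A)}(n)=\Xi^{(A)}(t_n)$ (with $\mathbb{P}(X^{(A)}(n+1)-X^{(A)}(n)=e^{(i)}\mid X^{(A)}(n))=F_i(X_i^{(A)}(n))/\sum_{j\le A}F_j(X_j^{(A)}(n))$), $X_i^{(A)}(\infty)=\lim_nX_i^{(A)}(n)$,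 $sMon_i=\{\exists N\ \forall n\ge N\ \forall j\ne i: X_j^{(A)}(n)=X_j^{(A)}(N)\}$, and $\mathbb{P}_{A,2}(\cdot)=\mathbb{P}(\cdot\cap sMon_1^c\cap sMon_2^c)/\mathbb{P}(sMon_1^c\cap sMon_2^c)$. *)

theory Defs
  imports "HOL-Probability.Probability"
begin

text \<open>tau i k omega: sojourn time of agent i at level k (k >= x0 = X_i(0)).\<close>

definition Xi :: "(nat \<Rightarrow> nat \<Rightarrow> 'a \<Rightarrow> real) \<Rightarrow> nat \<Rightarrow> nat \<Rightarrow> real \<Rightarrow> 'a \<Rightarrow> enat" where
  "Xi tau x0 i t \<omega> =
     (if \<exists>k. x0 \<le> k \<and> t < (\<Sum>l=x0..k. tau i l \<omega>)
      then enat (LEAST k. x0 \<le> k \<and> t < (\<Sum>l=x0..k. tau i l \<omega>))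
      else \<infinity>)"

primrec jump :: "(nat \<Rightarrow> nat \<Rightarrow> 'a \<Rightarrow> real) \<Rightarrow> nat \<Rightarrow> nat \<Rightarrow> nat \<Rightarrow> 'a \<Rightarrow> real" where
  "jump tau x0 A 0 \<omega> = 0"
| "jump tau x0 A (Suc n) \<omega> =
     Inf {s. jump tau x0 A n \<omega> < s \<and>
             (\<exists>i\<in>{1..A}. Xi tau x0 i s \<omega> \<noteq> Xi tau x0 i (jump tau x0 A n \<omega>) \<omega>)}"

definition urn :: "(nat \<Rightarrow> nat \<Rightarrow> 'a \<Rightarrow> real) \<Rightarrow> nat \<Rightarrow> nat \<Rightarrow> nat \<Rightarrow> nat \<Rightarrow> 'a \<Rightarrow> enat" where
  "urn tau x0 A n i \<omega> = Xi tau x0 i (jump tau x0 A n \<omega>) \<omega>"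

definition urn_lim :: "(nat \<Rightarrow> nat \<Rightarrow> 'a \<Rightarrow> real) \<Rightarrow> nat \<Rightarrow> nat \<Rightarrow> nat \<Rightarrow> 'a \<Rightarrow> enat" where
  "urn_lim tau x0 A i \<omega> = (SUP n. urn tau x0 A n i \<omega>)"

definition sMon :: "(nat \<Rightarrow> nat \<Rightarrow> 'a \<Rightarrow> real) \<Rightarrow> nat \<Rightarrow> nat \<Rightarrow> nat \<Rightarrow> 'a \<Rightarrow> bool" where
  "sMon tau x0 A i \<omega> =
     (\<exists>N. \<forall>n\<ge>N. \<forall>j\<in>{1..A}. j \<noteq> i \<longrightarrow> urn tau x0 A n j \<omega> = urn tau x0 A N j \<omega>)"

definition Texpl :: "(nat \<Rightarrow> nat \<Rightarrow> 'a \<Rightarrow> real) \<Rightarrow> nat \<Rightarrow> nat \<Rightarrow> 'a \<Rightarrow> ennreal" where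
  "Texpl tau x0 i \<omega> = (\<Sum>k. ennreal (tau i (x0 + k) \<omega>))"

definition Smin :: "(nat \<Rightarrow> nat \<Rightarrow> 'a \<Rightarrow> real) \<Rightarrow> nat \<Rightarrow> nat \<Rightarrow> 'a \<Rightarrow> ennreal" where
  "Smin tau x0 A \<omega> = Min ((\<lambda>i. Texpl tau x0 i \<omega>) ` {3..A})"

definition Ecal :: "'a measure \<Rightarrow> (nat \<Rightarrow> nat \<Rightarrow> 'a \<Rightarrow> real) \<Rightarrow> nat \<Rightarrow> nat \<Rightarrow> 'a set" where
  "Ecal M tau x0 A = {\<omega>\<in>space M. \<not> sMon tau x0 A 1 \<omega> \<and> \<not> sMon tau x0 A 2 \<omega>}"

definition PA2 :: "'a measure \<Rightarrow> (nat \<Rightarrow> nat \<Rightarrow> 'a \<Rightarrow> real) \<Rightarrow> nat \<Rightarrow> nat \<Rightarrow> 'a set \<Rightarrow> real" where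
  "PA2 M tau x0 A B = measure M (B \<inter> Ecal M tau x0 A) / measure M (Ecal M tau x0 A)"

definition PA2_cond :: "'a measure \<Rightarrow> (nat \<Rightarrow> nat \<Rightarrow> 'a \<Rightarrow> real) \<Rightarrow> nat \<Rightarrow> nat \<Rightarrow> 'a set \<Rightarrow> 'a set \<Rightarrow> real" where
  "PA2_cond M tau x0 A B C = PA2 M tau x0 A (B \<inter> C) / PA2 M tau x0 A C"

end

theory Submission
  imports Defs
begin

(*
  The jump times of the urn increase to the first explosion time min_{i \<le> A} T_i,
  and the agent that explodes first keeps growing until then. Consider the event
  that agent 1 explodes after a large time K0, agent 2 climbs to level x2 quickly
  and then rests there longer than K0, and every agent i \<ge> 3 explodes after
  time a but not all of them after K0. On this event an agent i \<ge> 3 explodes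
  first, so neither agent 1 nor agent 2 monopolises, S(A) > a and X_2(\<infinity>) \<ge> x2.
  By independence and Markov's inequality its probability is of the order of
  q_A(a) = \<Prod>_{i=3..A} P(T_i > a), which for a = s is exactly P(S(A) > s).
  Since P(T_i > s) \<le> \<theta> P(T_i > u) for some u < s and \<theta> < 1 uniformly in i,
  the conditional probability is O(\<theta>^(A-2)). Finally X_2(\<infinity>) \<ge> x2 forces the
  first sojourn of agent 2 to end before S(A), so P(X_2(\<infinity>) \<ge> x2) \<rightarrow> 0, while
  P(sMon_1^c \<inter> sMon_2^c) stays bounded below; this makes the ratio unbounded.
*)

lemma Inf_upper_closure_eq_Min:
  fixes V :: "real set"
  assumes "finite V" "V \<noteq> {}"
  shows "Inf {t. \<exists>v\<in>V. v \<le> t} = Min V"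
proof -
  have "{t. \<exists>v\<in>V. v \<le> t} = {Min V..}"
    by (auto simp: Min_le_iff[OF assms])
  then show ?thesis by simp
qed

lemma prod_le_half_prod:
  fixes r q :: "'i \<Rightarrow> real"
  assumes "finite I" "I \<noteq> {}" "\<And>i. i \<in> I \<Longrightarrow> 0 \<le> r i \<and> r i \<le> q i / 2"
  shows "(\<Prod>i\<in>I. r i) \<le> (\<Prod>i\<in>I. q i) / 2"
proof -
  have "(\<Prod>i\<in>I. r i) \<le> (\<Prod>i\<in>I. q i / 2)" using assms(3) by (intro prod_mono) auto
  also have "\<dots> = (\<Prod>i\<in>I. q i) / 2 ^ card I" by (simp add: prod_dividef)
  also have "\<dots> \<le> (\<Prod>i\<in>I. q i) / 2"
  proof (rule divide_left_mono)
    show "0 \<le> (\<Prod>i\<in>I. q i)" using assms(3) by (intro prod_nonneg) force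
    have "1 \<le> card I" using assms(1,2) by (simp add: Suc_le_eq card_gt_0_iff)
    then show "2 \<le> (2::real) ^ card I" using power_increasing[of 1 "card I" "2::real"] by simp
  qed simp
  finally show ?thesis .
qed

lemma prod_le_power_mult_prod:
  fixes q p :: "'i \<Rightarrow> real"
  assumes "\<And>i. i \<in> I \<Longrightarrow> 0 \<le> q i \<and> q i \<le> \<theta> * p i"
  shows "(\<Prod>i\<in>I. q i) \<le> \<theta> ^ card I * (\<Prod>i\<in>I. p i)"
proof -
  have "(\<Prod>i\<in>I. q i) \<le> (\<Prod>i\<in>I. \<theta> * p i)" using assms by (intro prod_mono) auto
  also have "\<dots> = \<theta> ^ card I * (\<Prod>i\<in>I. p i)" by (simp add: prod.distrib)
  finally show ?thesis .
qed

lemma tendsto_power_diff_0: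
  fixes \<theta> :: real
  assumes "0 \<le> \<theta>" "\<theta> < 1"
  shows "(\<lambda>n. \<theta> ^ (n - k)) \<longlonglongrightarrow> 0"
proof -
  have "(\<lambda>n. \<theta> ^ (n + k - k)) \<longlonglongrightarrow> 0" using assms by (simp add: LIMSEQ_power_zero)
  then show ?thesis by (rule LIMSEQ_offset)
qed

lemma filterlim_at_top_if_ge_div:
  fixes f g :: "nat \<Rightarrow> real"
  assumes "g \<longlonglongrightarrow> 0" "eventually (\<lambda>n. 0 < g n) sequentially" "0 < c"
    and "eventually (\<lambda>n. c / g n \<le> f n) sequentially"
  shows "filterlim f at_top sequentially"
proof -
  have "filterlim (\<lambda>n. inverse (g n)) at_top sequentially"
    using assms(1,2) by (rule filterlim_inverse_at_top)
  then have "filterlim (\<lambda>n. c * inverse (g n)) at_top sequentially"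
    using assms(3) by (intro filterlim_tendsto_pos_mult_at_top[OF tendsto_const])
  then show ?thesis
    by (rule filterlim_at_top_mono) (use assms(4) in \<open>simp add: divide_inverse\<close>)
qed

section \<open>Paths of the urn\<close>

definition exit_time :: "(nat \<Rightarrow> nat \<Rightarrow> 'a \<Rightarrow> real) \<Rightarrow> nat \<Rightarrow> nat \<Rightarrow> nat \<Rightarrow> 'a \<Rightarrow> real" where
  "exit_time tau x0 i k \<omega> = (\<Sum>l=x0..k. tau i l \<omega>)"

definition at_level :: "(nat \<Rightarrow> nat \<Rightarrow> 'a \<Rightarrow> real) \<Rightarrow> nat \<Rightarrow> nat \<Rightarrow> nat \<Rightarrow> real \<Rightarrow> 'a \<Rightarrow> bool" where
  "at_level tau x0 i k t \<omega> \<longleftrightarrow>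
     x0 \<le> k \<and> t < exit_time tau x0 i k \<omega> \<and> (\<forall>l\<in>{x0..<k}. exit_time tau x0 i l \<omega> \<le> t)"

lemma exit_time_Suc:
  "x0 \<le> Suc k \<Longrightarrow> exit_time tau x0 i (Suc k) \<omega> = exit_time tau x0 i k \<omega> + tau i (Suc k) \<omega>"
  unfolding exit_time_def by (simp add: sum.cl_ivl_Suc)

lemma exit_time_eq_sum: "exit_time tau x0 i (x0 + n) \<omega> = (\<Sum>j<Suc n. tau i (x0 + j) \<omega>)"
  unfolding exit_time_def using sum.shift_bounds_cl_nat_ivl[of "\<lambda>l. tau i l \<omega>" 0 x0 n]
  by (simp add: atLeast0AtMost lessThan_Suc_atMost add.commute)

lemma Xi_eq_enat_iff: "Xi tau x0 i t \<omega> = enat k \<longleftrightarrow> at_level tau x0 i k t \<omega>"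
proof
  assume Xi: "Xi tau x0 i t \<omega> = enat k"
  then have ex: "\<exists>k. x0 \<le> k \<and> t < exit_time tau x0 i k \<omega>"
    unfolding Xi_def exit_time_def by (auto split: if_splits)
  with Xi have "k = (LEAST k. x0 \<le> k \<and> t < exit_time tau x0 i k \<omega>)"
    unfolding Xi_def exit_time_def by (auto split: if_splits)
  then show "at_level tau x0 i k t \<omega>"
    unfolding at_level_def using LeastI_ex[OF ex] not_less_Least
    by (metis atLeastLessThan_iff not_le_imp_less)
next
  assume k: "at_level tau x0 i k t \<omega>"
  then have "(LEAST k. x0 \<le> k \<and> t < exit_time tau x0 i k \<omega>) = k"
    unfolding at_level_def by (intro Least_equality) (auto simp: not_le[symmetric])
  moreover have "\<exists>k. x0 \<le> k \<and> t < exit_time tau x0 i k \<omega>"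
    using k unfolding at_level_def by auto
  ultimately show "Xi tau x0 i t \<omega> = enat k"
    unfolding Xi_def exit_time_def by auto
qed

lemma Xi_eq_infinity_iff: "Xi tau x0 i t \<omega> = \<infinity> \<longleftrightarrow> (\<forall>k\<ge>x0. exit_time tau x0 i k \<omega> \<le> t)"
  unfolding Xi_def exit_time_def by (auto simp: not_less)

lemma enat_le_Xi_iff: "enat m \<le> Xi tau x0 i t \<omega> \<longleftrightarrow> (\<forall>k\<in>{x0..<m}. exit_time tau x0 i k \<omega> \<le> t)"
proof (cases "Xi tau x0 i t \<omega>")
  case (enat l)
  then have l: "at_level tau x0 i l t \<omega>" by (simp add: Xi_eq_enat_iff)
  have "m \<le> l \<longleftrightarrow> (\<forall>k\<in>{x0..<m}. exit_time tau x0 i k \<omega> \<le> t)"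
  proof
    assume "m \<le> l"
    then show "\<forall>k\<in>{x0..<m}. exit_time tau x0 i k \<omega> \<le> t" using l by (auto simp: at_level_def)
  next
    assume below: "\<forall>k\<in>{x0..<m}. exit_time tau x0 i k \<omega> \<le> t"
    show "m \<le> l"
    proof (rule ccontr)
      assume "\<not> m \<le> l"
      then have "l \<in> {x0..<m}" using l by (auto simp: at_level_def)
      then show False using below l by (force simp: at_level_def)
    qed
  qed
  then show ?thesis using enat by simp
next
  case infinity
  then show ?thesis using Xi_eq_infinity_iff[of tau x0 i t \<omega>] by auto
qed

lemma Xi_mono:
  assumes "t \<le> t'"
  shows "Xi tau x0 i t \<omega> \<le> Xi tau x0 i t' \<omega>"
proof (cases "Xi tau x0 i t \<omega>")
  case (enat k)
  then have "\<forall>l\<in>{x0..<k}. exit_time tau x0 i l \<omega> \<le> t'"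
    using assms by (auto simp: Xi_eq_enat_iff at_level_def)
  then show ?thesis using enat by (simp add: enat_le_Xi_iff)
next
  case infinity
  then have "Xi tau x0 i t' \<omega> = \<infinity>"
    using assms by (force simp: Xi_eq_infinity_iff)
  then show ?thesis by simp
qed

lemma Xi_changed_iff:
  assumes "Xi tau x0 i t \<omega> = enat k" "t < t'"
  shows "Xi tau x0 i t' \<omega> \<noteq> Xi tau x0 i t \<omega> \<longleftrightarrow> exit_time tau x0 i k \<omega> \<le> t'"
proof -
  have "at_level tau x0 i k t \<omega>" using assms(1) by (simp add: Xi_eq_enat_iff)
  then have "at_level tau x0 i k t' \<omega> \<longleftrightarrow> t' < exit_time tau x0 i k \<omega>"
    using assms(2) unfolding at_level_def by auto
  then show ?thesis unfolding assms(1) Xi_eq_enat_iff by auto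
qed

definition pending_exits :: "(nat \<Rightarrow> nat \<Rightarrow> 'a \<Rightarrow> real) \<Rightarrow> nat \<Rightarrow> nat set \<Rightarrow> real \<Rightarrow> 'a \<Rightarrow> real set" where
  "pending_exits tau x0 I t \<omega> = {exit_time tau x0 i k \<omega> | i k. i \<in> I \<and> at_level tau x0 i k t \<omega>}"

lemma changes_after_eq:
  "{t'. t < t' \<and> (\<exists>i\<in>I. Xi tau x0 i t' \<omega> \<noteq> Xi tau x0 i t \<omega>)} =
   {t'. \<exists>v\<in>pending_exits tau x0 I t \<omega>. v \<le> t'}"
proof safe
  fix t' i assume t': "t < t'" and i: "i \<in> I" and ne: "Xi tau x0 i t' \<omega> \<noteq> Xi tau x0 i t \<omega>"
  show "\<exists>v\<in>pending_exits tau x0 I t \<omega>. v \<le> t'"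
  proof (cases "Xi tau x0 i t \<omega>")
    case (enat k)
    then show ?thesis
      using Xi_changed_iff[OF enat t'] ne i unfolding pending_exits_def Xi_eq_enat_iff by blast
  next
    case infinity
    then show ?thesis using ne Xi_mono[of t t' tau x0 i \<omega>] t' by simp
  qed
next
  fix t' v assume "v \<in> pending_exits tau x0 I t \<omega>" "v \<le> t'"
  then obtain i k where i: "i \<in> I" and k: "at_level tau x0 i k t \<omega>" "exit_time tau x0 i k \<omega> \<le> t'"
    unfolding pending_exits_def by blast
  then show t': "t < t'" unfolding at_level_def by auto
  have Xi_t: "Xi tau x0 i t \<omega> = enat k" using k by (simp add: Xi_eq_enat_iff)
  have "Xi tau x0 i t' \<omega> \<noteq> Xi tau x0 i t \<omega>" using Xi_changed_iff[OF Xi_t t'] k(2) by simp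
  then show "\<exists>i\<in>I. Xi tau x0 i t' \<omega> \<noteq> Xi tau x0 i t \<omega>" using i by blast
qed

lemma pending_exits_eq_image:
  "pending_exits tau x0 I t \<omega> =
   (\<lambda>i. exit_time tau x0 i (the_enat (Xi tau x0 i t \<omega>)) \<omega>) ` {i\<in>I. Xi tau x0 i t \<omega> \<noteq> \<infinity>}"
  unfolding pending_exits_def
  by (force simp: Xi_eq_enat_iff[symmetric] elim!: enat.exhaust[of "Xi tau x0 _ t \<omega>"])

lemma finite_pending_exits: "finite I \<Longrightarrow> finite (pending_exits tau x0 I t \<omega>)"
  unfolding pending_exits_eq_image by simp

lemma jump_Suc_eq:
  "jump tau x0 A (Suc n) \<omega> = Inf {t. \<exists>v\<in>pending_exits tau x0 {1..A} (jump tau x0 A n \<omega>) \<omega>. v \<le> t}"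
  by (simp add: changes_after_eq)

text \<open>Once every agent has exploded there are no pending exits, and the next jump time is the
  junk value \<open>Inf {}\<close>.\<close>

lemma jump_Suc_le_iff:
  "jump tau x0 A (Suc n) \<omega> \<le> r \<longleftrightarrow>
    (pending_exits tau x0 {1..A} (jump tau x0 A n \<omega>) \<omega> = {} \<and> Inf ({}::real set) \<le> r) \<or>
    (\<exists>v\<in>pending_exits tau x0 {1..A} (jump tau x0 A n \<omega>) \<omega>. v \<le> r)"
  unfolding jump_Suc_eq
  by (cases "pending_exits tau x0 {1..A} (jump tau x0 A n \<omega>) \<omega> = {}")
    (simp_all add: Inf_upper_closure_eq_Min finite_pending_exits Min_le_iff)

lemma enat_le_urn_lim_iff:
  assumes "0 < x"
  shows "enat x \<le> urn_lim tau x0 A i \<omega> \<longleftrightarrow>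
    (\<exists>n. \<forall>k\<in>{x0..<x}. exit_time tau x0 i k \<omega> \<le> jump tau x0 A n \<omega>)"
proof -
  have le_iff: "enat x \<le> y \<longleftrightarrow> enat (x - 1) < y" for y
    using assms by (metis Suc_diff_1 Suc_ile_eq)
  show ?thesis
    unfolding le_iff urn_lim_def less_SUP_iff le_iff[symmetric] urn_def enat_le_Xi_iff by simp
qed

lemma Smin_greater_iff: "3 \<le> A \<Longrightarrow> a < Smin tau x0 A \<omega> \<longleftrightarrow> (\<forall>i\<in>{3..A}. a < Texpl tau x0 i \<omega>)"
  unfolding Smin_def by (subst Min_gr_iff) auto

lemma Smin_ge_iff: "3 \<le> A \<Longrightarrow> a \<le> Smin tau x0 A \<omega> \<longleftrightarrow> (\<forall>i\<in>{3..A}. a \<le> Texpl tau x0 i \<omega>)"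
  unfolding Smin_def by (subst Min_ge_iff) auto

lemma Texpl_ge_sojourn: "ennreal (tau i (x0 + j) \<omega>) \<le> Texpl tau x0 i \<omega>"
  unfolding Texpl_def using sum_le_suminf[OF summableI, of "{j}" "\<lambda>k. ennreal (tau i (x0 + k) \<omega>)"] by simp

lemma Texpl_split:
  "Texpl tau x0 i \<omega> = (\<Sum>j<N. ennreal (tau i (x0 + j) \<omega>)) + (\<Sum>j. ennreal (tau i (x0 + N + j) \<omega>))"
  unfolding Texpl_def using suminf_offset[OF summableI, of "\<lambda>k. ennreal (tau i (x0 + k) \<omega>)" N]
  by (simp add: add.commute add.left_commute)

lemma PA2_cond_eq:
  assumes "measure M (Ecal M tau x0 A) \<noteq> 0"
  shows "PA2_cond M tau x0 A B C =
    measure M (B \<inter> C \<inter> Ecal M tau x0 A) / measure M (C \<inter> Ecal M tau x0 A)"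
  using assms unfolding PA2_cond_def PA2_def by (simp add: Int_assoc)

locale urn_path =
  fixes tau :: "nat \<Rightarrow> nat \<Rightarrow> 'a \<Rightarrow> real" and x0 A :: nat and \<omega> :: 'a
  assumes sojourn_pos: "\<And>i k. i \<in> {1..A} \<Longrightarrow> x0 \<le> k \<Longrightarrow> 0 < tau i k \<omega>"
    and agents_nonempty: "1 \<le> A"
begin

lemma exit_time_strict_mono:
  assumes i: "i \<in> {1..A}" and "x0 \<le> k" "k < k'"
  shows "exit_time tau x0 i k \<omega> < exit_time tau x0 i k' \<omega>"
  using assms(3)
proof (induction k')
  case (Suc k')
  have "exit_time tau x0 i (Suc k') \<omega> = exit_time tau x0 i k' \<omega> + tau i (Suc k') \<omega>"
    using assms(2) Suc.prems by (intro exit_time_Suc) simp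
  moreover have "0 < tau i (Suc k') \<omega>" using sojourn_pos[OF i] assms(2) Suc.prems by simp
  ultimately show ?case using Suc by (cases "k = k'") auto
qed simp

lemma exit_time_mono:
  "i \<in> {1..A} \<Longrightarrow> x0 \<le> k \<Longrightarrow> k \<le> k' \<Longrightarrow> exit_time tau x0 i k \<omega> \<le> exit_time tau x0 i k' \<omega>"
  using exit_time_strict_mono[of i k k'] by (cases "k = k'") auto

lemma first_sojourn_le_exit_time:
  "i \<in> {1..A} \<Longrightarrow> x0 \<le> k \<Longrightarrow> tau i x0 \<omega> \<le> exit_time tau x0 i k \<omega>"
  using exit_time_mono[of i x0 k] by (simp add: exit_time_def)

lemma exit_time_pos: "i \<in> {1..A} \<Longrightarrow> x0 \<le> k \<Longrightarrow> 0 < exit_time tau x0 i k \<omega>"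
  using first_sojourn_le_exit_time sojourn_pos[of i x0] by fastforce

lemma Texpl_eq_SUP:
  assumes i: "i \<in> {1..A}"
  shows "Texpl tau x0 i \<omega> = (SUP n. ennreal (\<Sum>j<n. tau i (x0 + j) \<omega>))"
proof -
  have "Texpl tau x0 i \<omega> = (SUP n. \<Sum>j<n. ennreal (tau i (x0 + j) \<omega>))"
    unfolding Texpl_def by (rule suminf_eq_SUP)
  also have "\<dots> = (SUP n. ennreal (\<Sum>j<n. tau i (x0 + j) \<omega>))"
    using sojourn_pos[OF i] by (intro SUP_cong refl sum_ennreal) (auto simp: less_imp_le)
  finally show ?thesis .
qed

lemma exit_time_less_Texpl:
  assumes i: "i \<in> {1..A}" and k: "x0 \<le> k"
  shows "ennreal (exit_time tau x0 i k \<omega>) < Texpl tau x0 i \<omega>"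
proof -
  obtain n where n: "k = x0 + n" using k le_Suc_ex by blast
  have "exit_time tau x0 i k \<omega> < exit_time tau x0 i (x0 + Suc n) \<omega>"
    using exit_time_strict_mono[OF i k] n by simp
  then have "ennreal (exit_time tau x0 i k \<omega>) < ennreal (\<Sum>j<Suc (Suc n). tau i (x0 + j) \<omega>)"
    using exit_time_pos[OF i k] exit_time_eq_sum[of tau x0 i "Suc n" \<omega>]
    by (simp add: ennreal_less_iff del: sum.lessThan_Suc)
  also have "\<dots> \<le> Texpl tau x0 i \<omega>" unfolding Texpl_eq_SUP[OF i] by (rule SUP_upper) simp
  finally show ?thesis .
qed

lemma exists_exit_time_greater:
  assumes i: "i \<in> {1..A}" and t: "ennreal t < Texpl tau x0 i \<omega>"
  shows "\<exists>k\<ge>x0. t < exit_time tau x0 i k \<omega>"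
proof (cases "t < 0")
  case True
  then show ?thesis using exit_time_pos[OF i order.refl] by (intro exI[of _ x0]) auto
next
  case False
  then obtain n where n: "ennreal t < ennreal (\<Sum>j<n. tau i (x0 + j) \<omega>)"
    using t unfolding Texpl_eq_SUP[OF i] less_SUP_iff by blast
  then obtain l where "n = Suc l" by (cases n) auto
  then have "t < exit_time tau x0 i (x0 + l) \<omega>"
    using n False by (simp add: exit_time_eq_sum ennreal_less_iff del: sum.lessThan_Suc)
  then show ?thesis by (intro exI[of _ "x0 + l"]) simp
qed

lemma Xi_finite_before_explosion:
  "i \<in> {1..A} \<Longrightarrow> ennreal t < Texpl tau x0 i \<omega> \<Longrightarrow> Xi tau x0 i t \<omega> \<noteq> \<infinity>"
  using exists_exit_time_greater unfolding Xi_eq_infinity_iff by (auto simp: not_le)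

definition Tmin :: ennreal where
  "Tmin = Min ((\<lambda>i. Texpl tau x0 i \<omega>) ` {1..A})"

lemma less_Tmin_iff: "x < Tmin \<longleftrightarrow> (\<forall>i\<in>{1..A}. x < Texpl tau x0 i \<omega>)"
  unfolding Tmin_def using agents_nonempty by (subst Min_gr_iff) auto

lemma next_jump:
  assumes "ennreal t < Tmin"
  defines "t' \<equiv> Inf {s. \<exists>v\<in>pending_exits tau x0 {1..A} t \<omega>. v \<le> s}"
  shows "t < t'" "ennreal t' < Tmin" "\<exists>i\<in>{1..A}. Xi tau x0 i t \<omega> < Xi tau x0 i t' \<omega>"
proof -
  define g where "g i = exit_time tau x0 i (the_enat (Xi tau x0 i t \<omega>)) \<omega>" for i
  have finite: "Xi tau x0 i t \<omega> \<noteq> \<infinity>" if "i \<in> {1..A}" for i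
    using assms(1) that less_Tmin_iff Xi_finite_before_explosion by blast
  have level: "at_level tau x0 i (the_enat (Xi tau x0 i t \<omega>)) t \<omega>" if i: "i \<in> {1..A}" for i
    using finite[OF i] by (cases "Xi tau x0 i t \<omega>") (auto simp: Xi_eq_enat_iff[symmetric])
  have "{i\<in>{1..A}. Xi tau x0 i t \<omega> \<noteq> \<infinity>} = {1..A}" using finite by blast
  then have pending: "pending_exits tau x0 {1..A} t \<omega> = g ` {1..A}"
    unfolding pending_exits_eq_image g_def by simp
  have t': "t' = Min (g ` {1..A})"
    unfolding t'_def pending by (rule Inf_upper_closure_eq_Min) (use agents_nonempty in auto)
  have "t' \<in> g ` {1..A}" unfolding t' using agents_nonempty by (intro Min_in) auto
  then obtain i0 where i0: "i0 \<in> {1..A}" "t' = g i0" by blast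
  have "t < g i" if "i \<in> {1..A}" for i using level[OF that] unfolding g_def at_level_def by auto
  then show "t < t'" unfolding t' using agents_nonempty by (subst Min_gr_iff) auto
  have "ennreal t' < Texpl tau x0 i \<omega>" if i: "i \<in> {1..A}" for i
  proof -
    have "t' \<le> g i" unfolding t' using i by (intro Min_le) auto
    moreover have "ennreal (g i) < Texpl tau x0 i \<omega>"
      unfolding g_def using level[OF i] unfolding at_level_def by (intro exit_time_less_Texpl[OF i]) auto
    ultimately show ?thesis using ennreal_leI order.strict_trans1 by blast
  qed
  then show "ennreal t' < Tmin" using less_Tmin_iff by blast
  have Xi_i0: "Xi tau x0 i0 t \<omega> = enat (the_enat (Xi tau x0 i0 t \<omega>))"
    using finite[OF i0(1)] by auto
  have "Xi tau x0 i0 t' \<omega> \<noteq> Xi tau x0 i0 t \<omega>"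
    using Xi_changed_iff[OF Xi_i0 \<open>t < t'\<close>] i0(2) unfolding g_def by simp
  moreover have "Xi tau x0 i0 t \<omega> \<le> Xi tau x0 i0 t' \<omega>"
    using \<open>t < t'\<close> by (intro Xi_mono) simp
  ultimately show "\<exists>i\<in>{1..A}. Xi tau x0 i t \<omega> < Xi tau x0 i t' \<omega>" using i0(1) by force
qed

lemma jump_less_Tmin: "ennreal (jump tau x0 A n \<omega>) < Tmin"
proof (induction n)
  case 0
  have "0 < Texpl tau x0 i \<omega>" if i: "i \<in> {1..A}" for i
    using exit_time_less_Texpl[OF i order.refl] by (simp add: order.strict_trans1)
  then show ?case using less_Tmin_iff by simp
next
  case (Suc n)
  then show ?case using next_jump(2) unfolding jump_Suc_eq by blast
qed

lemma jump_less_Suc: "jump tau x0 A n \<omega> < jump tau x0 A (Suc n) \<omega>"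
  using next_jump(1)[OF jump_less_Tmin] unfolding jump_Suc_eq .

lemma strict_mono_jump: "strict_mono (\<lambda>n. jump tau x0 A n \<omega>)"
  using jump_less_Suc by (simp add: strict_mono_Suc_iff)

lemma Xi_jump_finite: "i \<in> {1..A} \<Longrightarrow> Xi tau x0 i (jump tau x0 A n \<omega>) \<omega> \<noteq> \<infinity>"
  using jump_less_Tmin less_Tmin_iff Xi_finite_before_explosion by blast

text \<open>The total level of the urn increases at every jump but is bounded by the total level at
  time \<open>L\<close>.\<close>

lemma exists_jump_greater:
  assumes L: "ennreal L < Tmin"
  shows "\<exists>n. L < jump tau x0 A n \<omega>"
proof (rule ccontr)
  assume "\<not> ?thesis"
  then have le: "jump tau x0 A n \<omega> \<le> L" for n by (simp add: not_less)
  define \<Phi> where "\<Phi> n = (\<Sum>i\<in>{1..A}. the_enat (Xi tau x0 i (jump tau x0 A n \<omega>) \<omega>))" for n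
  have the_enat_mono: "the_enat a \<le> the_enat b" if "a \<le> b" "b \<noteq> \<infinity>" for a b :: enat
    using that by (cases a; cases b) auto
  have the_enat_strict_mono: "the_enat a < the_enat b" if "a < b" "b \<noteq> \<infinity>" for a b :: enat
    using that by (cases a; cases b) auto
  have "\<Phi> n < \<Phi> (Suc n)" for n
    unfolding \<Phi>_def
  proof (rule sum_strict_mono_ex1)
    have "Xi tau x0 i (jump tau x0 A n \<omega>) \<omega> \<le> Xi tau x0 i (jump tau x0 A (Suc n) \<omega>) \<omega>" for i
      using jump_less_Suc[of n] by (intro Xi_mono) simp
    then show "\<forall>i\<in>{1..A}. the_enat (Xi tau x0 i (jump tau x0 A n \<omega>) \<omega>)
        \<le> the_enat (Xi tau x0 i (jump tau x0 A (Suc n) \<omega>) \<omega>)"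
      using Xi_jump_finite the_enat_mono by blast
    show "\<exists>i\<in>{1..A}. the_enat (Xi tau x0 i (jump tau x0 A n \<omega>) \<omega>)
        < the_enat (Xi tau x0 i (jump tau x0 A (Suc n) \<omega>) \<omega>)"
      using next_jump(3)[OF jump_less_Tmin[of n]] Xi_jump_finite the_enat_strict_mono
      unfolding jump_Suc_eq[symmetric] by blast
  qed simp
  then have "n \<le> \<Phi> n" for n
    by (induction n) (auto simp: Suc_le_eq intro: le_less_trans)
  moreover have "\<Phi> n \<le> (\<Sum>i\<in>{1..A}. the_enat (Xi tau x0 i L \<omega>))" for n
    unfolding \<Phi>_def using L less_Tmin_iff Xi_finite_before_explosion
    by (intro sum_mono the_enat_mono Xi_mono le) blast
  ultimately show False
    by (metis Suc_n_not_le_n order.trans)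
qed

lemma Tmin_le_Smin: "3 \<le> A \<Longrightarrow> Tmin \<le> Smin tau x0 A \<omega>"
  unfolding Tmin_def Smin_def by (rule Min_antimono) auto

lemma Smin_attained:
  assumes "3 \<le> A" "Smin tau x0 A \<omega> < Texpl tau x0 1 \<omega>" "Smin tau x0 A \<omega> < Texpl tau x0 2 \<omega>"
  obtains i0 where "i0 \<in> {3..A}" "Texpl tau x0 i0 \<omega> = Tmin" "Tmin = Smin tau x0 A \<omega>"
proof -
  have "Tmin \<in> (\<lambda>i. Texpl tau x0 i \<omega>) ` {1..A}"
    unfolding Tmin_def using agents_nonempty by (intro Min_in) auto
  then obtain j where j: "j \<in> {1..A}" "Tmin = Texpl tau x0 j \<omega>" by blast
  have "j \<noteq> 1" "j \<noteq> 2" using j Tmin_le_Smin[OF assms(1)] assms(2,3) by auto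
  then have "j \<in> {3..A}" using j(1) by auto
  moreover from this have "Smin tau x0 A \<omega> \<le> Tmin" unfolding j(2) Smin_def by (intro Min_le) auto
  ultimately show ?thesis using that j Tmin_le_Smin[OF assms(1)] by simp
qed

text \<open>The agent \<open>i0 \<ge> 3\<close> that explodes first keeps growing until \<open>Tmin\<close>, which the jump
  times approach; so no other agent is eventually the only one growing.\<close>

lemma not_sMon_if_Smin_less:
  assumes A: "3 \<le> A" and S1: "Smin tau x0 A \<omega> < Texpl tau x0 1 \<omega>" and S2: "Smin tau x0 A \<omega> < Texpl tau x0 2 \<omega>"
    and j: "j \<in> {1, 2}"
  shows "\<not> sMon tau x0 A j \<omega>"
proof
  assume "sMon tau x0 A j \<omega>"
  then obtain N where N: "\<And>n i. N \<le> n \<Longrightarrow> i \<in> {1..A} \<Longrightarrow> i \<noteq> j \<Longrightarrow> urn tau x0 A n i \<omega> = urn tau x0 A N i \<omega>"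
    unfolding sMon_def by blast
  obtain i0 where i0: "i0 \<in> {3..A}" "Texpl tau x0 i0 \<omega> = Tmin" using Smin_attained[OF A S1 S2] by blast
  then have i0A: "i0 \<in> {1..A}" by auto
  obtain k where k: "Xi tau x0 i0 (jump tau x0 A N \<omega>) \<omega> = enat k"
    using Xi_jump_finite[OF i0A, of N] by auto
  then have level: "at_level tau x0 i0 k (jump tau x0 A N \<omega>) \<omega>" by (simp add: Xi_eq_enat_iff)
  then have "ennreal (exit_time tau x0 i0 k \<omega>) < Tmin"
    using exit_time_less_Texpl[OF i0A] i0(2) unfolding at_level_def by auto
  then obtain n where n: "exit_time tau x0 i0 k \<omega> < jump tau x0 A n \<omega>" using exists_jump_greater by blast
  then have "jump tau x0 A N \<omega> < jump tau x0 A n \<omega>" using level unfolding at_level_def by auto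
  then have "N \<le> n" using strict_mono_jump by (meson less_imp_le strict_mono_less)
  have "urn tau x0 A n i0 \<omega> \<noteq> urn tau x0 A N i0 \<omega>"
    using Xi_changed_iff[OF k] n \<open>jump tau x0 A N \<omega> < jump tau x0 A n \<omega>\<close> unfolding urn_def by simp
  then show False using N[OF \<open>N \<le> n\<close> i0A] i0(1) j by auto
qed

lemma urn_lim_ge_if_exit_time_less_Smin:
  assumes A: "3 \<le> A" and S1: "Smin tau x0 A \<omega> < Texpl tau x0 1 \<omega>" and S2: "Smin tau x0 A \<omega> < Texpl tau x0 2 \<omega>"
    and x2: "x0 < x2" and early: "ennreal (exit_time tau x0 2 (x2 - 1) \<omega>) < Smin tau x0 A \<omega>"
  shows "enat x2 \<le> urn_lim tau x0 A 2 \<omega>"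
proof -
  have "ennreal (exit_time tau x0 2 (x2 - 1) \<omega>) < Tmin"
    using early by (metis A S1 S2 Smin_attained)
  then obtain n where n: "exit_time tau x0 2 (x2 - 1) \<omega> < jump tau x0 A n \<omega>"
    using exists_jump_greater by blast
  have "exit_time tau x0 2 k \<omega> \<le> jump tau x0 A n \<omega>" if "k \<in> {x0..<x2}" for k
    using exit_time_mono[of 2 k "x2 - 1"] that n A by fastforce
  then have "enat x2 \<le> urn tau x0 A n 2 \<omega>" unfolding urn_def enat_le_Xi_iff by blast
  also have "\<dots> \<le> urn_lim tau x0 A 2 \<omega>" unfolding urn_lim_def by (rule SUP_upper) simp
  finally show ?thesis .
qed

lemma first_sojourn_less_Smin_if_urn_lim_ge:
  assumes A: "3 \<le> A" and x2: "x0 < x2" and reach: "enat x2 \<le> urn_lim tau x0 A 2 \<omega>"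
  shows "ennreal (tau 2 x0 \<omega>) < Smin tau x0 A \<omega>"
proof -
  obtain n where "\<forall>k\<in>{x0..<x2}. exit_time tau x0 2 k \<omega> \<le> jump tau x0 A n \<omega>"
    using reach x2 enat_le_urn_lim_iff[of x2 tau x0 A 2 \<omega>] by auto
  then have "exit_time tau x0 2 (x2 - 1) \<omega> \<le> jump tau x0 A n \<omega>"
    using x2 by auto
  then have "tau 2 x0 \<omega> \<le> jump tau x0 A n \<omega>"
    using first_sojourn_le_exit_time[of 2 "x2 - 1"] A x2 by fastforce
  then have "ennreal (tau 2 x0 \<omega>) \<le> ennreal (jump tau x0 A n \<omega>)" by (rule ennreal_leI)
  also have "\<dots> < Tmin" by (rule jump_less_Tmin)
  also have "\<dots> \<le> Smin tau x0 A \<omega>" using Tmin_le_Smin[OF A] .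
  finally show ?thesis .
qed

end

section \<open>The probability model\<close>

locale urn_model = prob_space M for M :: "'a measure" +
  fixes tau :: "nat \<Rightarrow> nat \<Rightarrow> 'a \<Rightarrow> real" and x0 :: nat and F :: "nat \<Rightarrow> real"
  assumes rate_pos: "\<And>k. 0 < F k"
    and summable_inverse_rates: "summable (\<lambda>k. 1 / F k)"
    and sojourn_exponential:
      "\<And>i k. 1 \<le> i \<Longrightarrow> x0 \<le> k \<Longrightarrow> distributed M lborel (tau i k) (exponential_density (F k))"
    and sojourns_indep: "indep_vars (\<lambda>_. borel) (\<lambda>(i, k). tau i k) {(i, k). 1 \<le> i \<and> x0 \<le> k}"
begin

lemma measurable_tau:
  assumes "1 \<le> i" "x0 \<le> k"
  shows "tau i k \<in> borel_measurable M"
  using distributed_measurable[OF sojourn_exponential[OF assms]] by simp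

lemma measurable_exit_time: "1 \<le> i \<Longrightarrow> (\<lambda>\<omega>. exit_time tau x0 i k \<omega>) \<in> borel_measurable M"
  unfolding exit_time_def by (intro borel_measurable_sum measurable_tau) auto

lemma pred_at_level:
  assumes "1 \<le> i" and t: "t \<in> borel_measurable M"
  shows "Measurable.pred M (\<lambda>\<omega>. at_level tau x0 i k (t \<omega>) \<omega>)"
proof -
  have "Measurable.pred M (\<lambda>\<omega>. t \<omega> < exit_time tau x0 i l \<omega>)"
    "Measurable.pred M (\<lambda>\<omega>. exit_time tau x0 i l \<omega> \<le> t \<omega>)" for l
    unfolding Measurable.pred_def
    by (intro borel_measurable_less borel_measurable_le t measurable_exit_time assms(1))+
  then show ?thesis
    unfolding at_level_def by (intro pred_intros_conj1' pred_intros_logic(3) pred_intros_finite(3)) auto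
qed

lemma measurable_jump: "(\<lambda>\<omega>. jump tau x0 A n \<omega>) \<in> borel_measurable M"
proof (induction n)
  case (Suc n)
  have at_level: "Measurable.pred M (\<lambda>\<omega>. at_level tau x0 i k (jump tau x0 A n \<omega>) \<omega>)"
    if "i \<in> {1..A}" for i k
    using that by (intro pred_at_level Suc.IH) auto
  have exit_le: "Measurable.pred M (\<lambda>\<omega>. exit_time tau x0 i k \<omega> \<le> r)" if "i \<in> {1..A}" for i k r
    using that measurable_exit_time unfolding Measurable.pred_def by (intro borel_measurable_le) auto
  have jump_le_iff: "jump tau x0 A (Suc n) \<omega> \<le> r \<longleftrightarrow>
      (\<not> (\<exists>i\<in>{1..A}. \<exists>k. at_level tau x0 i k (jump tau x0 A n \<omega>) \<omega>) \<and> Inf ({}::real set) \<le> r) \<or>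
      (\<exists>i\<in>{1..A}. \<exists>k. at_level tau x0 i k (jump tau x0 A n \<omega>) \<omega> \<and> exit_time tau x0 i k \<omega> \<le> r)"
    for \<omega> r
    unfolding jump_Suc_le_iff pending_exits_def by blast
  show ?case
  proof (subst borel_measurable_iff_le, intro allI)
    fix r
    have "Measurable.pred M (\<lambda>\<omega>. jump tau x0 A (Suc n) \<omega> \<le> r)"
      unfolding jump_le_iff
      by (intro pred_intros_logic(2,3,5) pred_intros_countable_bounded(4) pred_intros_countable(2)
          at_level exit_le) auto
    then show "{\<omega> \<in> space M. jump tau x0 A (Suc n) \<omega> \<le> r} \<in> sets M"
      unfolding Measurable.pred_def .
  qed
qed simp

lemma sets_sMon: "{\<omega>\<in>space M. sMon tau x0 A j \<omega>} \<in> sets M"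
proof -
  have enat_eq_iff: "a = b \<longleftrightarrow> (\<forall>k. a = enat k \<longleftrightarrow> b = enat k)" for a b :: enat
    by (cases a; cases b) auto
  have urn_eq_iff: "urn tau x0 A n i \<omega> = urn tau x0 A N i \<omega> \<longleftrightarrow>
      (\<forall>k. at_level tau x0 i k (jump tau x0 A n \<omega>) \<omega> \<longleftrightarrow> at_level tau x0 i k (jump tau x0 A N \<omega>) \<omega>)"
    for n N i \<omega>
    unfolding urn_def by (subst enat_eq_iff) (simp only: Xi_eq_enat_iff)
  have "Measurable.pred M (\<lambda>\<omega>. \<exists>N. \<forall>n. N \<le> n \<longrightarrow> (\<forall>i\<in>{1..A}. i \<noteq> j \<longrightarrow>
      (\<forall>k. at_level tau x0 i k (jump tau x0 A n \<omega>) \<omega> \<longleftrightarrow> at_level tau x0 i k (jump tau x0 A N \<omega>) \<omega>)))"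
    by (intro pred_intros_countable(1,2) pred_intros_imp' pred_intros_countable_bounded(3)
        pred_intros_logic(6) pred_at_level measurable_jump) auto
  then show ?thesis unfolding Measurable.pred_def sMon_def urn_eq_iff .
qed

lemma sets_Ecal: "Ecal M tau x0 A \<in> sets M"
proof -
  have "Ecal M tau x0 A =
      space M - ({\<omega>\<in>space M. sMon tau x0 A 1 \<omega>} \<union> {\<omega>\<in>space M. sMon tau x0 A 2 \<omega>})"
    unfolding Ecal_def by auto
  then show ?thesis using sets_sMon by auto
qed

lemma sets_urn_lim_ge:
  assumes "0 < x" "1 \<le> i"
  shows "{\<omega>\<in>space M. enat x \<le> urn_lim tau x0 A i \<omega>} \<in> sets M"
proof -
  have [measurable]: "(\<lambda>\<omega>. exit_time tau x0 i k \<omega>) \<in> borel_measurable M" for k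
    using measurable_exit_time[OF assms(2)] .
  have [measurable]: "(\<lambda>\<omega>. jump tau x0 A n \<omega>) \<in> borel_measurable M" for n
    by (rule measurable_jump)
  have "Measurable.pred M (\<lambda>\<omega>. \<exists>n. \<forall>k\<in>{x0..<x}. exit_time tau x0 i k \<omega> \<le> jump tau x0 A n \<omega>)"
    by measurable
  then show ?thesis unfolding Measurable.pred_def enat_le_urn_lim_iff[OF assms(1)] .
qed

lemma measurable_Texpl: "1 \<le> i \<Longrightarrow> (\<lambda>\<omega>. Texpl tau x0 i \<omega>) \<in> borel_measurable M"
proof -
  assume i: "1 \<le> i"
  have [measurable]: "tau i (x0 + k) \<in> borel_measurable M" for k
    using measurable_tau[OF i, of "x0 + k"] by simp
  show ?thesis unfolding Texpl_def by measurable
qed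

lemma sets_Smin_greater: "3 \<le> A \<Longrightarrow> {\<omega>\<in>space M. a < Smin tau x0 A \<omega>} \<in> sets M"
proof -
  assume A: "3 \<le> A"
  have "Measurable.pred M (\<lambda>\<omega>. a < Texpl tau x0 i \<omega>)" if "i \<in> {3..A}" for i
    using that measurable_Texpl[of i] unfolding Measurable.pred_def by (intro borel_measurable_less) auto
  then have "Measurable.pred M (\<lambda>\<omega>. \<forall>i\<in>{3..A}. a < Texpl tau x0 i \<omega>)"
    by (rule pred_intros_countable_bounded(3))
  then show ?thesis unfolding Measurable.pred_def Smin_greater_iff[OF A] .
qed

abbreviation sojourn_indices :: "(nat \<times> nat) set" where
  "sojourn_indices \<equiv> {(i, k). 1 \<le> i \<and> x0 \<le> k}"

lemma prob_blocks_Int: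
  fixes K :: "'j \<Rightarrow> (nat \<times> nat) set" and P :: "'j \<Rightarrow> ((nat \<times> nat) \<Rightarrow> real) \<Rightarrow> bool"
  assumes K: "\<And>l. l \<in> L \<Longrightarrow> K l \<subseteq> sojourn_indices" and disj: "disjoint_family_on K L"
    and J: "J \<subseteq> L" "finite J" "J \<noteq> {}"
    and P: "\<And>l. l \<in> J \<Longrightarrow> P l \<in> measurable (PiM (K l) (\<lambda>_. borel)) (count_space UNIV)"
  shows "prob (\<Inter>l\<in>J. {\<omega>\<in>space M. P l (restrict (\<lambda>p. case_prod tau p \<omega>) (K l))}) =
    (\<Prod>l\<in>J. prob {\<omega>\<in>space M. P l (restrict (\<lambda>p. case_prod tau p \<omega>) (K l))})"
proof -
  define P' where "P' l = (if l \<in> J then P l else (\<lambda>_. True))" for l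
  have "indep_vars (\<lambda>l. PiM (K l) (\<lambda>_. borel)) (\<lambda>l \<omega>. restrict (\<lambda>p. case_prod tau p \<omega>) (K l)) L"
    using indep_vars_restrict[OF sojourns_indep K disj] by simp
  then have "indep_vars (\<lambda>_. count_space UNIV) (\<lambda>l \<omega>. P' l (restrict (\<lambda>p. case_prod tau p \<omega>) (K l))) L"
    by (rule indep_vars_compose2) (auto simp: P'_def P)
  from indep_varsD[OF this J(3,2,1), of "\<lambda>_. {True}"]
  have "prob (\<Inter>l\<in>J. (\<lambda>\<omega>. P' l (restrict (\<lambda>p. case_prod tau p \<omega>) (K l))) -` {True} \<inter> space M) =
      (\<Prod>l\<in>J. prob ((\<lambda>\<omega>. P' l (restrict (\<lambda>p. case_prod tau p \<omega>) (K l))) -` {True} \<inter> space M))"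
    by simp
  moreover have "(\<lambda>\<omega>. P' l (restrict (\<lambda>p. case_prod tau p \<omega>) (K l))) -` {True} \<inter> space M =
      {\<omega>\<in>space M. P l (restrict (\<lambda>p. case_prod tau p \<omega>) (K l))}" if "l \<in> J" for l
    using that by (auto simp: P'_def)
  ultimately show ?thesis by (simp cong: INF_cong prod.cong)
qed

definition agent_event :: "((nat \<Rightarrow> real) \<Rightarrow> bool) \<Rightarrow> nat \<Rightarrow> 'a set" where
  "agent_event P i = {\<omega>\<in>space M. P (\<lambda>j. tau i (x0 + j) \<omega>)}"

lemma measurable_sojourn_sequence:
  assumes "1 \<le> i"
  shows "(\<lambda>\<omega> j. tau i (x0 + j) \<omega>) \<in> measurable M (PiM UNIV (\<lambda>_. borel))"
proof -
  have "(\<lambda>\<omega>. \<lambda>j\<in>UNIV. tau i (x0 + j) \<omega>) \<in> measurable M (PiM UNIV (\<lambda>_. borel))"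
    using measurable_tau[OF assms] by (intro measurable_restrict) auto
  then show ?thesis by (simp add: restrict_UNIV)
qed

lemma sets_agent_event:
  assumes "1 \<le> i" "P \<in> measurable (PiM UNIV (\<lambda>_. borel)) (count_space UNIV)"
  shows "agent_event P i \<in> sets M"
proof -
  have "Measurable.pred M (\<lambda>\<omega>. P (\<lambda>j. tau i (x0 + j) \<omega>))"
    using measurable_compose[OF measurable_sojourn_sequence[OF assms(1)] assms(2)] .
  then show ?thesis unfolding agent_event_def Measurable.pred_def .
qed

lemma prob_agent_events_Int:
  assumes J: "J \<subseteq> {1..}" "finite J" "J \<noteq> {}"
    and P: "\<And>i. i \<in> J \<Longrightarrow> P i \<in> measurable (PiM UNIV (\<lambda>_. borel)) (count_space UNIV)"
  shows "prob (\<Inter>i\<in>J. agent_event (P i) i) = (\<Prod>i\<in>J. prob (agent_event (P i) i))"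
proof -
  define K where "K i = {(i', k). i' = i \<and> x0 \<le> k}" for i :: nat
  define P' where "P' i f = P i (\<lambda>j. f (i, x0 + j))" for i and f :: "nat \<times> nat \<Rightarrow> real"
  have "K i \<subseteq> sojourn_indices" if "i \<in> {1..}" for i using that by (auto simp: K_def)
  moreover have "disjoint_family_on K {1..}" by (auto simp: disjoint_family_on_def K_def)
  moreover have "P' i \<in> measurable (PiM (K i) (\<lambda>_. borel)) (count_space UNIV)" if i: "i \<in> J" for i
  proof -
    have "(\<lambda>f j. f (i, x0 + j)) \<in> measurable (PiM (K i) (\<lambda>_. borel)) (PiM UNIV (\<lambda>_. borel :: real measure))"
      by (rule measurable_PiM_single') (auto simp: K_def intro!: measurable_component_singleton)
    then show ?thesis unfolding P'_def using P[OF i] by (rule measurable_compose)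
  qed
  moreover have "{\<omega>\<in>space M. P' i (restrict (\<lambda>p. case_prod tau p \<omega>) (K i))} = agent_event (P i) i" for i
    by (auto simp: P'_def K_def agent_event_def)
  ultimately show ?thesis using prob_blocks_Int[of "{1..}" K J P'] J by simp
qed

lemma prob_agent_events_1_2_rest:
  assumes A: "3 \<le> A"
    and measurable: "P1 \<in> measurable (PiM UNIV (\<lambda>_. borel)) (count_space UNIV)"
      "P2 \<in> measurable (PiM UNIV (\<lambda>_. borel)) (count_space UNIV)"
      "P \<in> measurable (PiM UNIV (\<lambda>_. borel)) (count_space UNIV)"
  shows "prob (agent_event P1 1 \<inter> agent_event P2 2 \<inter> (\<Inter>i\<in>{3..A}. agent_event P i)) =
    prob (agent_event P1 1) * prob (agent_event P2 2) * (\<Prod>i\<in>{3..A}. prob (agent_event P i))"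
proof -
  define Q where "Q i = (if i = 1 then P1 else if i = 2 then P2 else P)" for i :: nat
  have split: "{1..A} = insert 1 (insert 2 {3..A})" using A by auto
  have "prob (\<Inter>i\<in>{1..A}. agent_event (Q i) i) = (\<Prod>i\<in>{1..A}. prob (agent_event (Q i) i))"
    using A measurable by (intro prob_agent_events_Int) (auto simp: Q_def)
  moreover have "(\<Inter>i\<in>{3..A}. agent_event (Q i) i) = (\<Inter>i\<in>{3..A}. agent_event P i)"
    "(\<Prod>i\<in>{3..A}. prob (agent_event (Q i) i)) = (\<Prod>i\<in>{3..A}. prob (agent_event P i))"
    by (auto simp: Q_def intro!: INF_cong prod.cong)
  ultimately show ?thesis unfolding split by (simp add: Q_def Int_assoc mult.assoc)
qed

lemma prob_sojourns_in:
  assumes i: "1 \<le> i" and K: "finite K" "\<And>k. k \<in> K \<Longrightarrow> x0 \<le> k"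
    and B: "\<And>k. k \<in> K \<Longrightarrow> B k \<in> sets borel"
  shows "prob {\<omega>\<in>space M. \<forall>k\<in>K. tau i k \<omega> \<in> B k} = (\<Prod>k\<in>K. prob {\<omega>\<in>space M. tau i k \<omega> \<in> B k})"
proof (cases "K = {}")
  case False
  define J where "J = Pair i ` K"
  have J: "J \<noteq> {}" "finite J" "J \<subseteq> sojourn_indices" using False K i by (auto simp: J_def)
  have "prob (\<Inter>p\<in>J. case_prod tau p -` B (snd p) \<inter> space M) =
      (\<Prod>p\<in>J. prob (case_prod tau p -` B (snd p) \<inter> space M))"
    using B by (intro indep_varsD[OF sojourns_indep J]) (auto simp: J_def)
  moreover have "(\<Inter>p\<in>J. case_prod tau p -` B (snd p) \<inter> space M) = {\<omega>\<in>space M. \<forall>k\<in>K. tau i k \<omega> \<in> B k}"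
    using False by (auto simp: J_def)
  moreover have "(\<Prod>p\<in>J. prob (case_prod tau p -` B (snd p) \<inter> space M)) =
      (\<Prod>k\<in>K. prob {\<omega>\<in>space M. tau i k \<omega> \<in> B k})"
    unfolding J_def by (subst prod.reindex) (auto simp: inj_on_def vimage_def Int_def conj_commute intro!: prod.cong)
  ultimately show ?thesis by simp
qed (simp add: prob_space)

lemma prob_head_tail_Int:
  fixes N :: nat and a :: real and b :: ennreal
  assumes i: "1 \<le> i"
  defines "head \<equiv> {\<omega>\<in>space M. \<forall>k\<in>{x0..<x0 + N}. tau i k \<omega> \<le> a}"
    and "tail \<equiv> {\<omega>\<in>space M. (\<Sum>j. ennreal (tau i (x0 + N + j) \<omega>)) < b}"
  shows "prob (head \<inter> tail) = prob head * prob tail"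
proof -
  define K where "K l = (if l = (0::nat) then Pair i ` {x0..<x0 + N} else (\<lambda>j. (i, x0 + N + j)) ` UNIV)" for l
  define P where "P l f = (if l = (0::nat) then \<forall>k\<in>{x0..<x0 + N}. f (i, k) \<le> a else (\<Sum>j. ennreal (f (i, x0 + N + j))) < b)" for l f
  have "K l \<subseteq> sojourn_indices" if "l \<in> {0, 1}" for l using i that by (auto simp: K_def)
  moreover have "disjoint_family_on K {0, 1}" by (auto simp: disjoint_family_on_def K_def)
  moreover have "P l \<in> measurable (PiM (K l) (\<lambda>_. borel)) (count_space UNIV)" if "l \<in> {0, 1}" for l
  proof (cases "l = 0")
    case True
    have P0: "P 0 = (\<lambda>f. \<forall>k\<in>{x0..<x0 + N}. f (i, k) \<le> a)" by (simp add: P_def fun_eq_iff)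
    have "Measurable.pred (PiM (K 0) (\<lambda>_. borel)) (\<lambda>f. \<forall>k\<in>{x0..<x0 + N}. f (i, k) \<le> a)"
    proof (intro pred_intros_finite(3))
      fix k assume "k \<in> {x0..<x0 + N}"
      then have "(\<lambda>f. f (i, k)) \<in> borel_measurable (PiM (K 0) (\<lambda>_. borel))"
        by (intro measurable_component_singleton) (auto simp: K_def)
      then show "Measurable.pred (PiM (K 0) (\<lambda>_. borel)) (\<lambda>f. f (i, k) \<le> a)"
        unfolding Measurable.pred_def by (intro borel_measurable_le) auto
    qed simp
    then show ?thesis unfolding True P0 .
  next
    case False
    have component: "(\<lambda>f. f (i, x0 + N + j)) \<in> borel_measurable (PiM (K 1) (\<lambda>_. borel))" for j
      by (intro measurable_component_singleton) (auto simp: K_def)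
    have "(\<lambda>f. ennreal (f (i, x0 + N + j))) \<in> borel_measurable (PiM (K 1) (\<lambda>_. borel))" for j
      using measurable_compose[OF component measurable_ennreal] by simp
    then have "(\<lambda>f. \<Sum>j. ennreal (f (i, x0 + N + j))) \<in> borel_measurable (PiM (K 1) (\<lambda>_. borel))"
      by measurable
    then have "Measurable.pred (PiM (K 1) (\<lambda>_. borel)) (\<lambda>f. (\<Sum>j. ennreal (f (i, x0 + N + j))) < b)"
      unfolding Measurable.pred_def by (intro borel_measurable_less) auto
    moreover have "l = 1" "P 1 = (\<lambda>f. (\<Sum>j. ennreal (f (i, x0 + N + j))) < b)"
      using False that by (simp_all add: P_def fun_eq_iff)
    ultimately show ?thesis by simp
  qed
  moreover have "{\<omega>\<in>space M. P 0 (restrict (\<lambda>p. case_prod tau p \<omega>) (K 0))} = head"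
    "{\<omega>\<in>space M. P 1 (restrict (\<lambda>p. case_prod tau p \<omega>) (K 1))} = tail"
    by (auto simp: P_def K_def head_def tail_def)
  ultimately show ?thesis using prob_blocks_Int[of "{0, 1}" K "{0, 1}" P] by (simp add: Int_commute)
qed

lemma prob_tau_le:
  "1 \<le> i \<Longrightarrow> x0 \<le> k \<Longrightarrow> 0 \<le> a \<Longrightarrow> prob {\<omega>\<in>space M. tau i k \<omega> \<le> a} = 1 - exp (- a * F k)"
  using exponential_distributedD_le[OF sojourn_exponential _ rate_pos] by simp

lemma prob_tau_gt:
  "1 \<le> i \<Longrightarrow> x0 \<le> k \<Longrightarrow> 0 \<le> a \<Longrightarrow> prob {\<omega>\<in>space M. a < tau i k \<omega>} = exp (- a * F k)"
  using exponential_distributedD_gt[OF sojourn_exponential _ rate_pos] by simp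

definition pos_paths :: "'a set" where
  "pos_paths = {\<omega>\<in>space M. \<forall>i k. 1 \<le> i \<longrightarrow> x0 \<le> k \<longrightarrow> 0 < tau i k \<omega>}"

lemma AE_pos_paths: "AE \<omega> in M. \<omega> \<in> pos_paths"
proof -
  have "AE \<omega> in M. 0 < tau i k \<omega>" if ik: "1 \<le> i" "x0 \<le> k" for i k
  proof -
    have "{\<omega>\<in>space M. tau i k \<omega> \<le> 0} \<in> sets M"
      using measurable_tau[OF ik] by measurable
    moreover have "emeasure M {\<omega>\<in>space M. tau i k \<omega> \<le> 0} = 0"
      using prob_tau_le[OF ik, of 0] by (simp add: emeasure_eq_measure)
    ultimately show ?thesis by (simp add: AE_iff_measurable not_less)
  qed
  then show ?thesis unfolding pos_paths_def by (auto simp: AE_all_countable intro!: AE_impI)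
qed

lemma sets_pos_paths: "pos_paths \<in> sets M"
proof -
  have "Measurable.pred M (\<lambda>\<omega>. 0 < tau i k \<omega>)" if "1 \<le> i" "x0 \<le> k" for i k
    using that unfolding Measurable.pred_def by (intro borel_measurable_less measurable_tau) auto
  then have "Measurable.pred M (\<lambda>\<omega>. \<forall>i k. 1 \<le> i \<longrightarrow> x0 \<le> k \<longrightarrow> 0 < tau i k \<omega>)"
    by (intro pred_intros_countable(1) pred_intros_imp')
  then show ?thesis unfolding pos_paths_def Measurable.pred_def .
qed

lemma urn_path_if_pos_paths: "\<omega> \<in> pos_paths \<Longrightarrow> 1 \<le> A \<Longrightarrow> urn_path tau x0 A \<omega>"
  unfolding pos_paths_def by unfold_locales auto

lemma prob_mono_on_pos_paths:
  assumes X: "X \<in> sets M" and Y: "Y \<in> sets M" and sub: "X \<inter> pos_paths \<subseteq> Y"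
  shows "prob X \<le> prob Y"
proof -
  have "prob X = prob (X \<inter> pos_paths)"
    using AE_pos_paths X sets_pos_paths by (intro measure_eq_AE) auto
  also have "\<dots> \<le> prob Y" using sub Y by (intro finite_measure_mono)
  finally show ?thesis .
qed

section \<open>Explosion times\<close>

lemma nn_integral_tau: "1 \<le> i \<Longrightarrow> x0 \<le> k \<Longrightarrow> (\<integral>\<^sup>+\<omega>. ennreal (tau i k \<omega>) \<partial>M) = ennreal (1 / F k)"
proof -
  assume ik: "1 \<le> i" "x0 \<le> k"
  have "(\<integral>\<^sup>+\<omega>. ennreal (tau i k \<omega>) \<partial>M) = (\<integral>\<^sup>+x. ennreal (exponential_density (F k) x) * ennreal x \<partial>lborel)"
    by (rule distributed_nn_integral[OF sojourn_exponential[OF ik], symmetric]) simp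
  also have "\<dots> = (\<integral>\<^sup>+x. ennreal (erlang_density 0 (F k) x * x ^ 1) \<partial>lborel)"
    by (intro nn_integral_cong) (auto simp: erlang_density_def ennreal_mult'' ennreal_neg)
  also have "\<dots> = ennreal (1 / F k)"
    using nn_integral_erlang_ith_moment[of "F k" 0 1] rate_pos[of k]
    by (simp add: divide_ennreal ennreal_1[symmetric] del: ennreal_1)
  finally show ?thesis .
qed

lemma prob_ennreal_ge_le:
  fixes Y :: "'a \<Rightarrow> ennreal"
  assumes Y: "Y \<in> borel_measurable M" and int: "(\<integral>\<^sup>+\<omega>. Y \<omega> \<partial>M) \<le> ennreal e"
    and c: "0 < c" and e: "0 \<le> e"
  shows "prob {\<omega>\<in>space M. ennreal c \<le> Y \<omega>} \<le> e / c"
proof -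
  define S where "S = {\<omega>\<in>space M. ennreal c \<le> Y \<omega>}"
  have S: "S \<in> sets M" unfolding S_def using Y by measurable
  have "ennreal c * emeasure M S = (\<integral>\<^sup>+\<omega>. ennreal c * indicator S \<omega> \<partial>M)"
    by (rule nn_integral_cmult_indicator[OF S, symmetric])
  also have "\<dots> \<le> (\<integral>\<^sup>+\<omega>. Y \<omega> \<partial>M)"
    by (intro nn_integral_mono) (auto simp: S_def indicator_def)
  finally have "ennreal (c * prob S) \<le> ennreal e"
    using c int by (simp add: emeasure_eq_measure ennreal_mult)
  then show ?thesis unfolding S_def[symmetric] using c e by (simp add: ennreal_le_iff field_simps)
qed

lemma summable_inverse_rates_from: "summable (\<lambda>j. 1 / F (x0 + N + j))"
  using summable_ignore_initial_segment[OF summable_inverse_rates, of "x0 + N"] by (simp add: add.commute)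

lemma nn_integral_Texpl_tail:
  assumes i: "1 \<le> i"
  shows "(\<integral>\<^sup>+\<omega>. (\<Sum>j. ennreal (tau i (x0 + N + j) \<omega>)) \<partial>M) = ennreal (\<Sum>j. 1 / F (x0 + N + j))"
proof -
  have "(\<lambda>\<omega>. ennreal (tau i (x0 + N + j) \<omega>)) \<in> borel_measurable M" for j
    using measurable_tau[OF i, of "x0 + N + j"] by measurable
  then have "(\<integral>\<^sup>+\<omega>. (\<Sum>j. ennreal (tau i (x0 + N + j) \<omega>)) \<partial>M) =
      (\<Sum>j. (\<integral>\<^sup>+\<omega>. ennreal (tau i (x0 + N + j) \<omega>) \<partial>M))"
    by (rule nn_integral_suminf)
  also have "\<dots> = (\<Sum>j. ennreal (1 / F (x0 + N + j)))"
    using nn_integral_tau[OF i] by simp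
  also have "\<dots> = ennreal (\<Sum>j. 1 / F (x0 + N + j))"
    using rate_pos by (intro suminf_ennreal2 summable_inverse_rates_from) (auto simp: less_imp_le)
  finally show ?thesis .
qed

definition Texpl_mean :: real where
  "Texpl_mean = (\<Sum>j. 1 / F (x0 + j))"

lemma Texpl_mean_nonneg: "0 \<le> Texpl_mean"
  unfolding Texpl_mean_def using summable_inverse_rates_from[of 0] rate_pos
  by (intro suminf_nonneg) (auto simp: less_imp_le)

definition T_gt :: "real \<Rightarrow> nat \<Rightarrow> 'a set" where
  "T_gt a i = {\<omega>\<in>space M. ennreal a < Texpl tau x0 i \<omega>}"

definition T_ge :: "real \<Rightarrow> nat \<Rightarrow> 'a set" where
  "T_ge a i = {\<omega>\<in>space M. ennreal a \<le> Texpl tau x0 i \<omega>}"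

lemma T_gt_agent_event: "T_gt a i = agent_event (\<lambda>g. ennreal a < (\<Sum>j. ennreal (g j))) i"
  unfolding T_gt_def agent_event_def Texpl_def ..

lemma T_ge_agent_event: "T_ge a i = agent_event (\<lambda>g. ennreal a \<le> (\<Sum>j. ennreal (g j))) i"
  unfolding T_ge_def agent_event_def Texpl_def ..

lemma measurable_series_less:
  "(\<lambda>g. ennreal a < (\<Sum>j. ennreal (g j))) \<in> measurable (PiM UNIV (\<lambda>_. borel)) (count_space UNIV)"
  by measurable

lemma measurable_series_le:
  "(\<lambda>g. ennreal a \<le> (\<Sum>j. ennreal (g j))) \<in> measurable (PiM UNIV (\<lambda>_. borel)) (count_space UNIV)"
  by measurable

lemma sets_T_gt: "1 \<le> i \<Longrightarrow> T_gt a i \<in> sets M"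
  unfolding T_gt_def using measurable_Texpl by measurable

lemma sets_T_ge: "1 \<le> i \<Longrightarrow> T_ge a i \<in> sets M"
  unfolding T_ge_def using measurable_Texpl by measurable

lemma T_gt_antimono: "a \<le> b \<Longrightarrow> T_gt b i \<subseteq> T_gt a i"
  unfolding T_gt_def by (auto intro: order.strict_trans1[OF ennreal_leI])

lemma prob_T_gt_eq: "1 \<le> i \<Longrightarrow> prob (T_gt a i) = 1 - prob {\<omega>\<in>space M. Texpl tau x0 i \<omega> \<le> ennreal a}"
proof -
  assume i: "1 \<le> i"
  have "{\<omega>\<in>space M. Texpl tau x0 i \<omega> \<le> ennreal a} \<in> sets M" using measurable_Texpl[OF i] by measurable
  moreover have "T_gt a i = space M - {\<omega>\<in>space M. Texpl tau x0 i \<omega> \<le> ennreal a}"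
    unfolding T_gt_def by (auto simp: not_le)
  ultimately show ?thesis using prob_compl by simp
qed

lemma exp_le_prob_T_gt:
  assumes i: "1 \<le> i" and a: "0 \<le> a"
  shows "exp (- a * F x0) \<le> prob (T_gt a i)"
proof -
  have "exp (- a * F x0) = prob {\<omega>\<in>space M. a < tau i x0 \<omega>}" using prob_tau_gt[OF i order.refl a] by simp
  also have "\<dots> \<le> prob (T_gt a i)"
  proof (intro finite_measure_mono sets_T_gt[OF i] subsetI)
    fix \<omega> assume \<omega>: "\<omega> \<in> {\<omega>\<in>space M. a < tau i x0 \<omega>}"
    then have "ennreal a < ennreal (tau i x0 \<omega>)" using a by (simp add: ennreal_less_iff)
    also have "\<dots> \<le> Texpl tau x0 i \<omega>" using Texpl_ge_sojourn[of tau i x0 0 \<omega>] by simp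
    finally show "\<omega> \<in> T_gt a i" using \<omega> unfolding T_gt_def by simp
  qed
  finally show ?thesis .
qed

lemma prob_T_gt_pos: "1 \<le> i \<Longrightarrow> 0 \<le> a \<Longrightarrow> 0 < prob (T_gt a i)"
  using exp_le_prob_T_gt[of i a] exp_gt_zero[of "- a * F x0"] by linarith

lemma prob_T_ge_le: "1 \<le> i \<Longrightarrow> 0 < c \<Longrightarrow> prob (T_ge c i) \<le> Texpl_mean / c"
  using prob_ennreal_ge_le[OF measurable_Texpl _ _ Texpl_mean_nonneg] nn_integral_Texpl_tail[of i 0]
  unfolding T_ge_def Texpl_def Texpl_mean_def by simp

lemma prob_Texpl_le_le:
  assumes i: "1 \<le> i" and u: "0 \<le> u"
  shows "prob {\<omega>\<in>space M. Texpl tau x0 i \<omega> \<le> ennreal u} \<le> 1 - exp (- u * F x0)"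
proof -
  have "prob {\<omega>\<in>space M. Texpl tau x0 i \<omega> \<le> ennreal u} = 1 - prob (T_gt u i)"
    using prob_T_gt_eq[OF i, of u] by simp
  then show ?thesis using exp_le_prob_T_gt[OF i u] by simp
qed

lemma prob_head_sojourns_le:
  assumes "1 \<le> i" "0 \<le> a"
  shows "prob {\<omega>\<in>space M. \<forall>k\<in>{x0..<x0 + N}. tau i k \<omega> \<le> a} = (\<Prod>k\<in>{x0..<x0 + N}. 1 - exp (- a * F k))"
  using prob_sojourns_in[OF assms(1), of "{x0..<x0 + N}" "\<lambda>_. {..a}"] prob_tau_le[OF assms(1) _ assms(2)]
  by simp

lemma prob_tail_sum_less_ge_half:
  assumes i: "1 \<le> i" and b: "0 < b" and mean: "(\<Sum>j. 1 / F (x0 + N + j)) \<le> b / 2"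
  shows "1 / 2 \<le> prob {\<omega>\<in>space M. (\<Sum>j. ennreal (tau i (x0 + N + j) \<omega>)) < ennreal b}"
proof -
  have "(\<lambda>\<omega>. ennreal (tau i (x0 + N + j) \<omega>)) \<in> borel_measurable M" for j
    using measurable_tau[OF i, of "x0 + N + j"] by measurable
  then have tail: "(\<lambda>\<omega>. \<Sum>j. ennreal (tau i (x0 + N + j) \<omega>)) \<in> borel_measurable M"
    by measurable
  have "0 \<le> (\<Sum>j. 1 / F (x0 + N + j))"
    using summable_inverse_rates_from[of N] rate_pos by (intro suminf_nonneg) (auto simp: less_imp_le)
  then have "prob {\<omega>\<in>space M. ennreal b \<le> (\<Sum>j. ennreal (tau i (x0 + N + j) \<omega>))} \<le>
      (\<Sum>j. 1 / F (x0 + N + j)) / b"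
    using prob_ennreal_ge_le[OF tail _ b] nn_integral_Texpl_tail[OF i, of N] by simp
  also have "\<dots> \<le> 1 / 2" using mean b by (simp add: field_simps)
  finally have "prob {\<omega>\<in>space M. ennreal b \<le> (\<Sum>j. ennreal (tau i (x0 + N + j) \<omega>))} \<le> 1 / 2" .
  moreover have "{\<omega>\<in>space M. ennreal b \<le> (\<Sum>j. ennreal (tau i (x0 + N + j) \<omega>))} \<in> sets M"
    using tail by measurable
  moreover have "{\<omega>\<in>space M. (\<Sum>j. ennreal (tau i (x0 + N + j) \<omega>)) < ennreal b} =
      space M - {\<omega>\<in>space M. ennreal b \<le> (\<Sum>j. ennreal (tau i (x0 + N + j) \<omega>))}"
    by (auto simp: not_le)
  ultimately show ?thesis using prob_compl by simp
qed

text \<open>Make the tail after \<open>N\<close> sojourns small in mean, then ask the first \<open>N\<close> sojourns to be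
  short; the two events are independent and their intersection forces \<open>Texpl \<le> s\<close>.\<close>

lemma exists_uniform_prob_Texpl_le:
  assumes s: "0 < s"
  obtains c where "0 < c" "\<And>i. 1 \<le> i \<Longrightarrow> c \<le> prob {\<omega>\<in>space M. Texpl tau x0 i \<omega> \<le> ennreal s}"
proof -
  obtain N0 where N0: "\<forall>n\<ge>N0. norm (\<Sum>j. 1 / F (x0 + (j + n))) < s / 4"
    using suminf_exist_split[of "s / 4" "\<lambda>j. 1 / F (x0 + j)"] s summable_inverse_rates_from[of 0] by auto
  define N where "N = max N0 1"
  have N: "0 < N" "N0 \<le> N" by (auto simp: N_def)
  have "norm (\<Sum>j. 1 / F (x0 + N + j)) < s / 4"
    using N0[rule_format, OF N(2)] by (simp add: ac_simps)
  then have mean: "(\<Sum>j. 1 / F (x0 + N + j)) \<le> (s / 2) / 2"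
    using abs_ge_self[of "\<Sum>j. 1 / F (x0 + N + j)"] unfolding real_norm_def by linarith
  define a where "a = s / (2 * N)"
  have a: "0 < a" using s N by (simp add: a_def)
  define h where "h = (\<Prod>k\<in>{x0..<x0 + N}. 1 - exp (- a * F k))"
  have h: "0 < h" unfolding h_def using a rate_pos by (intro prod_pos) (auto simp: mult_pos_pos)
  have "h / 2 \<le> prob {\<omega>\<in>space M. Texpl tau x0 i \<omega> \<le> ennreal s}" if i: "1 \<le> i" for i
  proof -
    define head where "head = {\<omega>\<in>space M. \<forall>k\<in>{x0..<x0 + N}. tau i k \<omega> \<le> a}"
    define tail where "tail = {\<omega>\<in>space M. (\<Sum>j. ennreal (tau i (x0 + N + j) \<omega>)) < ennreal (s / 2)}"
    have "prob head = h"
      unfolding head_def h_def using prob_head_sojourns_le[OF i less_imp_le[OF a]] .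
    moreover have "1 / 2 \<le> prob tail"
      unfolding tail_def using prob_tail_sum_less_ge_half[OF i _ mean] s by simp
    ultimately have "h / 2 \<le> prob head * prob tail"
      using mult_left_mono[of "1 / 2" "prob tail" h] h by simp
    also have "\<dots> = prob (head \<inter> tail)"
      unfolding head_def tail_def by (rule prob_head_tail_Int[OF i, symmetric])
    also have "\<dots> \<le> prob {\<omega>\<in>space M. Texpl tau x0 i \<omega> \<le> ennreal s}"
    proof (intro finite_measure_mono subsetI)
      show "{\<omega>\<in>space M. Texpl tau x0 i \<omega> \<le> ennreal s} \<in> sets M"
        using measurable_Texpl[OF i] by measurable
      fix \<omega> assume \<omega>: "\<omega> \<in> head \<inter> tail"
      have "(\<Sum>j<N. ennreal (tau i (x0 + j) \<omega>)) \<le> (\<Sum>j<N. ennreal a)"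
        using \<omega> unfolding head_def by (intro sum_mono ennreal_leI) auto
      also have "\<dots> = ennreal (s / 2)"
        using N a by (simp add: a_def ennreal_of_nat_eq_real_of_nat flip: ennreal_mult)
      finally have "Texpl tau x0 i \<omega> \<le> ennreal (s / 2) + ennreal (s / 2)"
        unfolding Texpl_split[of tau x0 i \<omega> N] using \<omega> unfolding tail_def by (intro add_mono) auto
      also have "\<dots> = ennreal s" using s by (simp flip: ennreal_plus)
      finally show "\<omega> \<in> {\<omega>\<in>space M. Texpl tau x0 i \<omega> \<le> ennreal s}" using \<omega> by (simp add: head_def)
    qed
    finally show ?thesis .
  qed
  then show thesis using that[of "h / 2"] h by simp
qed

lemma prob_Smin_greater:
  "3 \<le> A \<Longrightarrow> prob {\<omega>\<in>space M. ennreal a < Smin tau x0 A \<omega>} = (\<Prod>i\<in>{3..A}. prob (T_gt a i))"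
proof -
  assume A: "3 \<le> A"
  have "{\<omega>\<in>space M. ennreal a < Smin tau x0 A \<omega>} = (\<Inter>i\<in>{3..A}. T_gt a i)"
    using A by (auto simp: T_gt_def Smin_greater_iff)
  also have "prob \<dots> = (\<Prod>i\<in>{3..A}. prob (T_gt a i))"
    unfolding T_gt_agent_event using A measurable_series_less by (intro prob_agent_events_Int) auto
  finally show ?thesis .
qed

end

section \<open>Estimates for a growing number of agents\<close>

locale urn_estimates = urn_model +
  fixes s :: real and x2 :: nat
  assumes s_pos: "0 < s" and x0_less_x2: "x0 < x2"
begin

text \<open>Markov's inequality \<open>P(T_i \<ge> K0) \<le> E T_i / K0\<close> together with \<open>P(T_i > s) \<ge> exp (- s F x0)\<close>
  explains the choice of \<open>K0\<close>.\<close>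

definition K0 :: real where
  "K0 = max (s + 1) (2 * Texpl_mean / exp (- s * F x0) + 1)"

lemma s_less_K0: "s < K0"
  by (simp add: K0_def)

lemma prob_T_ge_K0_le:
  assumes i: "1 \<le> i" and a: "a \<le> s"
  shows "prob (T_ge K0 i) \<le> prob (T_gt a i) / 2"
proof -
  have K0: "0 < K0" using s_pos s_less_K0 by linarith
  have "2 * Texpl_mean / exp (- s * F x0) \<le> K0" unfolding K0_def by simp
  then have "2 * Texpl_mean \<le> K0 * exp (- s * F x0)" by (simp add: field_simps)
  then have "Texpl_mean / K0 \<le> exp (- s * F x0) / 2" using K0 by (simp add: field_simps)
  moreover have "exp (- s * F x0) \<le> prob (T_gt s i)"
    using exp_le_prob_T_gt[OF i] s_pos by simp
  moreover have "prob (T_gt s i) \<le> prob (T_gt a i)"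
    using T_gt_antimono[OF a] sets_T_gt[OF i] by (intro finite_measure_mono)
  ultimately show ?thesis using prob_T_ge_le[OF i K0] by linarith
qed

lemma prob_not_all_late_ge:
  assumes A: "3 \<le> A" and a: "a \<le> s"
    and P1: "P1 \<in> measurable (PiM UNIV (\<lambda>_. borel)) (count_space UNIV)"
    and P2: "P2 \<in> measurable (PiM UNIV (\<lambda>_. borel)) (count_space UNIV)"
  shows "prob (agent_event P1 1) * prob (agent_event P2 2) * (\<Prod>i\<in>{3..A}. prob (T_gt a i)) / 2
    \<le> prob (agent_event P1 1 \<inter> agent_event P2 2 \<inter> (\<Inter>i\<in>{3..A}. T_gt a i) - (\<Inter>i\<in>{3..A}. T_ge K0 i))"
proof -
  define p where "p = prob (agent_event P1 1) * prob (agent_event P2 2)"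
  define X where "X = agent_event P1 1 \<inter> agent_event P2 2 \<inter> (\<Inter>i\<in>{3..A}. T_gt a i)"
  have "ennreal a < ennreal K0" using a s_less_K0 s_pos by (intro ennreal_lessI) auto
  then have "T_ge K0 i \<subseteq> T_gt a i" for i
    unfolding T_ge_def T_gt_def by (auto intro: order.strict_trans2)
  then have X_late: "X \<inter> (\<Inter>i\<in>{3..A}. T_ge K0 i) =
      agent_event P1 1 \<inter> agent_event P2 2 \<inter> (\<Inter>i\<in>{3..A}. T_ge K0 i)"
    using A unfolding X_def by blast
  have sets: "X \<in> sets M" "(\<Inter>i\<in>{3..A}. T_ge K0 i) \<in> sets M"
    unfolding X_def using A
    by (intro sets.Int sets.finite_INT sets_agent_event sets_T_gt sets_T_ge P1 P2; simp)+
  have "prob X = p * (\<Prod>i\<in>{3..A}. prob (T_gt a i))"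
    unfolding X_def p_def T_gt_agent_event
    by (rule prob_agent_events_1_2_rest[OF A P1 P2 measurable_series_less])
  moreover have "prob (X \<inter> (\<Inter>i\<in>{3..A}. T_ge K0 i)) = p * (\<Prod>i\<in>{3..A}. prob (T_ge K0 i))"
    using prob_agent_events_1_2_rest[OF A P1 P2 measurable_series_le, of K0]
    unfolding X_late unfolding p_def T_ge_agent_event .
  moreover have "p * (\<Prod>i\<in>{3..A}. prob (T_ge K0 i)) \<le> p * ((\<Prod>i\<in>{3..A}. prob (T_gt a i)) / 2)"
    using A prob_T_ge_K0_le[OF _ a] unfolding p_def
    by (intro mult_left_mono prod_le_half_prod) auto
  ultimately show ?thesis
    unfolding X_def[symmetric] p_def[symmetric] finite_measure_Diff'[OF sets] by simp
qed

lemma mem_Ecal_if_not_all_late: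
  assumes A: "3 \<le> A" and \<omega>: "\<omega> \<in> pos_paths"
    and late: "\<omega> \<in> T_gt K0 1" "\<omega> \<in> T_gt K0 2" and not_all_late: "\<omega> \<notin> (\<Inter>i\<in>{3..A}. T_ge K0 i)"
  shows "\<omega> \<in> Ecal M tau x0 A"
proof -
  interpret urn_path tau x0 A \<omega> using urn_path_if_pos_paths[OF \<omega>] A by simp
  have "\<omega> \<in> space M" using \<omega> by (simp add: pos_paths_def)
  then have "Smin tau x0 A \<omega> < ennreal K0"
    using not_all_late A by (auto simp: T_ge_def Smin_ge_iff not_le[symmetric])
  then have "Smin tau x0 A \<omega> < Texpl tau x0 1 \<omega>" "Smin tau x0 A \<omega> < Texpl tau x0 2 \<omega>"
    using late by (auto simp: T_gt_def)
  then show ?thesis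
    using not_sMon_if_Smin_less[OF A] \<open>\<omega> \<in> space M\<close> by (simp add: Ecal_def)
qed

lemma mem_reach_if_not_all_late:
  assumes A: "3 \<le> A" and \<omega>: "\<omega> \<in> pos_paths"
    and late: "\<omega> \<in> T_gt K0 1" "\<omega> \<in> T_gt K0 2" and not_all_late: "\<omega> \<notin> (\<Inter>i\<in>{3..A}. T_ge K0 i)"
    and climb: "exit_time tau x0 2 (x2 - 1) \<omega> \<le> a" and rest_late: "\<omega> \<in> (\<Inter>i\<in>{3..A}. T_gt a i)"
  shows "enat x2 \<le> urn_lim tau x0 A 2 \<omega>"
proof -
  interpret urn_path tau x0 A \<omega> using urn_path_if_pos_paths[OF \<omega>] A by simp
  have "\<omega> \<in> space M" using \<omega> by (simp add: pos_paths_def)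
  then have "Smin tau x0 A \<omega> < ennreal K0"
    using not_all_late A by (auto simp: T_ge_def Smin_ge_iff not_le[symmetric])
  then have "Smin tau x0 A \<omega> < Texpl tau x0 1 \<omega>" "Smin tau x0 A \<omega> < Texpl tau x0 2 \<omega>"
    using late by (auto simp: T_gt_def)
  moreover have "ennreal (exit_time tau x0 2 (x2 - 1) \<omega>) < Smin tau x0 A \<omega>"
  proof -
    have "ennreal (exit_time tau x0 2 (x2 - 1) \<omega>) \<le> ennreal a" using climb by (rule ennreal_leI)
    also have "\<dots> < Smin tau x0 A \<omega>" using rest_late A by (auto simp: T_gt_def Smin_greater_iff)
    finally show ?thesis .
  qed
  ultimately show ?thesis using urn_lim_ge_if_exit_time_less_Smin[OF A _ _ x0_less_x2] by blast
qed

lemma prob_Ecal_ge: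
  assumes A: "3 \<le> A"
  shows "prob (T_gt K0 1) * prob (T_gt K0 2) / 2 \<le> prob (Ecal M tau x0 A)"
proof -
  have "1 \<le> (\<Prod>i\<in>{3..A}. prob (T_gt 0 i))"
    using exp_le_prob_T_gt[of _ 0] by (intro prod_ge_1) simp
  then have "prob (T_gt K0 1) * prob (T_gt K0 2) * 1 / 2 \<le>
      prob (T_gt K0 1) * prob (T_gt K0 2) * (\<Prod>i\<in>{3..A}. prob (T_gt 0 i)) / 2"
    by (intro divide_right_mono mult_left_mono) auto
  also have "\<dots> \<le> prob (T_gt K0 1 \<inter> T_gt K0 2 \<inter> (\<Inter>i\<in>{3..A}. T_gt 0 i) - (\<Inter>i\<in>{3..A}. T_ge K0 i))"
    using prob_not_all_late_ge[OF A less_imp_le[OF s_pos] measurable_series_less measurable_series_less]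
    unfolding T_gt_agent_event .
  also have "\<dots> \<le> prob (Ecal M tau x0 A)"
    using A mem_Ecal_if_not_all_late[OF A]
    by (intro prob_mono_on_pos_paths sets_Ecal sets.Diff sets.Int sets.finite_INT sets_T_gt sets_T_ge) auto
  finally show ?thesis by simp
qed

text \<open>Read on the sojourn sequence of agent 2, indexed from level \<open>x0\<close>: the agent reaches
  level \<open>x2\<close> by time \<open>a\<close> and then stays at \<open>x2\<close> for longer than \<open>K0\<close>.\<close>

definition early_climb :: "real \<Rightarrow> (nat \<Rightarrow> real) \<Rightarrow> bool" where
  "early_climb a g \<longleftrightarrow> (\<forall>j\<in>{..<x2 - x0}. g j \<le> a / (x2 - x0)) \<and> K0 < g (x2 - x0)"

lemma measurable_early_climb:
  "early_climb a \<in> measurable (PiM UNIV (\<lambda>_. borel)) (count_space UNIV)"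
proof -
  have component: "(\<lambda>g. g j) \<in> borel_measurable (PiM UNIV (\<lambda>_. borel :: real measure))" for j
    by (rule measurable_component_singleton) simp
  have "Measurable.pred (PiM UNIV (\<lambda>_. borel)) (\<lambda>g. g j \<le> a / (x2 - x0))" for j
    unfolding Measurable.pred_def by (rule borel_measurable_le[OF component]) simp
  moreover have "Measurable.pred (PiM UNIV (\<lambda>_. borel)) (\<lambda>g. K0 < g (x2 - x0))"
    unfolding Measurable.pred_def by (rule borel_measurable_less[OF _ component]) simp
  ultimately show ?thesis
    unfolding early_climb_def by (intro pred_intros_logic(3) pred_intros_finite(3)) auto
qed

lemma early_climb_subset_T_gt: "agent_event (early_climb a) 2 \<subseteq> T_gt K0 2"
proof
  fix \<omega> assume \<omega>: "\<omega> \<in> agent_event (early_climb a) 2"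
  then have "ennreal K0 < ennreal (tau 2 x2 \<omega>)"
    using s_pos s_less_K0 x0_less_x2 by (intro ennreal_lessI) (auto simp: agent_event_def early_climb_def)
  also have "\<dots> \<le> Texpl tau x0 2 \<omega>" using Texpl_ge_sojourn[of tau 2 x0 "x2 - x0" \<omega>] x0_less_x2 by simp
  finally show "\<omega> \<in> T_gt K0 2" using \<omega> by (simp add: T_gt_def agent_event_def)
qed

lemma exit_time_le_if_early_climb:
  assumes "\<omega> \<in> agent_event (early_climb a) 2"
  shows "exit_time tau x0 2 (x2 - 1) \<omega> \<le> a"
proof -
  have "exit_time tau x0 2 (x2 - 1) \<omega> = (\<Sum>j<x2 - x0. tau 2 (x0 + j) \<omega>)"
    using exit_time_eq_sum[of tau x0 2 "x2 - x0 - 1" \<omega>] x0_less_x2 by (simp add: Suc_diff_Suc)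
  also have "\<dots> \<le> (\<Sum>j<x2 - x0. a / (x2 - x0))"
    using assms by (intro sum_mono) (auto simp: agent_event_def early_climb_def)
  also have "\<dots> = a" using x0_less_x2 by simp
  finally show ?thesis .
qed

lemma prob_early_climb_pos:
  assumes a: "0 < a"
  shows "0 < prob (agent_event (early_climb a) 2)"
proof -
  define B where "B k = (if k < x2 then {..a / (x2 - x0)} else {K0<..})" for k
  have "agent_event (early_climb a) 2 = {\<omega>\<in>space M. \<forall>k\<in>{x0..x2}. tau 2 k \<omega> \<in> B k}"
  proof -
    have "early_climb a (\<lambda>j. tau 2 (x0 + j) \<omega>) \<longleftrightarrow> (\<forall>k\<in>{x0..x2}. tau 2 k \<omega> \<in> B k)" for \<omega>
    proof -
      have "(\<forall>j\<in>{..<x2 - x0}. tau 2 (x0 + j) \<omega> \<le> a / (x2 - x0)) \<longleftrightarrow>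
          (\<forall>k\<in>{x0..<x2}. tau 2 k \<omega> \<le> a / (x2 - x0))"
        by (auto simp: Ball_def dest: le_Suc_ex)
      moreover have "{x0..x2} = insert x2 {x0..<x2}" using x0_less_x2 by auto
      ultimately show ?thesis using x0_less_x2 by (auto simp: early_climb_def B_def)
    qed
    then show ?thesis unfolding agent_event_def by blast
  qed
  also have "prob \<dots> = (\<Prod>k\<in>{x0..x2}. prob {\<omega>\<in>space M. tau 2 k \<omega> \<in> B k})"
    by (rule prob_sojourns_in) (auto simp: B_def)
  also have "0 < \<dots>"
  proof (rule prod_pos)
    fix k assume k: "k \<in> {x0..x2}"
    show "0 < prob {\<omega>\<in>space M. tau 2 k \<omega> \<in> B k}"
    proof (cases "k < x2")
      case True
      have "exp (- (a / (x2 - x0)) * F k) < 1" using a x0_less_x2 rate_pos[of k] by simp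
      then show ?thesis
        using True k a prob_tau_le[of 2 k "a / (x2 - x0)"] by (simp add: B_def)
    next
      case False
      then show ?thesis
        using k s_pos s_less_K0 prob_tau_gt[of 2 k K0] by (simp add: B_def)
    qed
  qed
  finally show ?thesis .
qed

lemma prob_Smin_gt_reach_Ecal_ge:
  assumes A: "3 \<le> A" and a: "0 < a" "a \<le> s"
  shows "prob (T_gt K0 1) * prob (agent_event (early_climb a) 2) * (\<Prod>i\<in>{3..A}. prob (T_gt a i)) / 2
    \<le> prob ({\<omega>\<in>space M. ennreal a < Smin tau x0 A \<omega>} \<inter>
             {\<omega>\<in>space M. enat x2 \<le> urn_lim tau x0 A 2 \<omega>} \<inter> Ecal M tau x0 A)"
proof -
  define G where "G = T_gt K0 1 \<inter> agent_event (early_climb a) 2 \<inter> (\<Inter>i\<in>{3..A}. T_gt a i) -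
    (\<Inter>i\<in>{3..A}. T_ge K0 i)"
  have "prob (T_gt K0 1) * prob (agent_event (early_climb a) 2) * (\<Prod>i\<in>{3..A}. prob (T_gt a i)) / 2 \<le> prob G"
    using prob_not_all_late_ge[OF A a(2) measurable_series_less measurable_early_climb]
    unfolding G_def T_gt_agent_event .
  also have "\<dots> \<le> prob ({\<omega>\<in>space M. ennreal a < Smin tau x0 A \<omega>} \<inter>
             {\<omega>\<in>space M. enat x2 \<le> urn_lim tau x0 A 2 \<omega>} \<inter> Ecal M tau x0 A)"
  proof (rule prob_mono_on_pos_paths)
    show "G \<in> sets M" unfolding G_def using A
      by (intro sets.Diff sets.Int sets.finite_INT sets_T_gt sets_T_ge sets_agent_event measurable_early_climb; simp)+
    show "{\<omega>\<in>space M. ennreal a < Smin tau x0 A \<omega>} \<inter> {\<omega>\<in>space M. enat x2 \<le> urn_lim tau x0 A 2 \<omega>} \<inter>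
        Ecal M tau x0 A \<in> sets M"
      using A x0_less_x2 by (intro sets.Int sets_Smin_greater sets_urn_lim_ge sets_Ecal) auto
    show "G \<inter> pos_paths \<subseteq> {\<omega>\<in>space M. ennreal a < Smin tau x0 A \<omega>} \<inter>
        {\<omega>\<in>space M. enat x2 \<le> urn_lim tau x0 A 2 \<omega>} \<inter> Ecal M tau x0 A"
    proof
      fix \<omega> assume \<omega>: "\<omega> \<in> G \<inter> pos_paths"
      then have G: "\<omega> \<in> T_gt K0 1" "\<omega> \<in> T_gt K0 2" "\<omega> \<in> (\<Inter>i\<in>{3..A}. T_gt a i)"
        "\<omega> \<notin> (\<Inter>i\<in>{3..A}. T_ge K0 i)" "\<omega> \<in> pos_paths" "\<omega> \<in> space M"
        using early_climb_subset_T_gt unfolding G_def by (auto simp: pos_paths_def)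
      moreover have "exit_time tau x0 2 (x2 - 1) \<omega> \<le> a"
        using \<omega> unfolding G_def by (intro exit_time_le_if_early_climb) auto
      ultimately show "\<omega> \<in> {\<omega>\<in>space M. ennreal a < Smin tau x0 A \<omega>} \<inter>
          {\<omega>\<in>space M. enat x2 \<le> urn_lim tau x0 A 2 \<omega>} \<inter> Ecal M tau x0 A"
        using mem_reach_if_not_all_late[OF A] mem_Ecal_if_not_all_late[OF A] A
        by (auto simp: T_gt_def Smin_greater_iff)
    qed
  qed
  finally show ?thesis .
qed

lemma exists_uniform_ratio:
  obtains u \<theta> where "0 < u" "u \<le> s" "0 \<le> \<theta>" "\<theta> < 1"
    "\<And>i. 1 \<le> i \<Longrightarrow> prob (T_gt s i) \<le> \<theta> * prob (T_gt u i)"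
proof -
  obtain c where c: "0 < c" "\<And>i. 1 \<le> i \<Longrightarrow> c \<le> prob {\<omega>\<in>space M. Texpl tau x0 i \<omega> \<le> ennreal s}"
    using exists_uniform_prob_Texpl_le[OF s_pos] by blast
  have c_le_1: "c \<le> 1" using c(2)[of 1] prob_le_1 by (meson order.trans order_refl)
  define u where "u = min s (c / (2 * F x0))"
  have u: "0 < u" "u \<le> s" "u * F x0 \<le> c / 2"
    using s_pos c rate_pos[of x0] by (auto simp: u_def min_def field_simps)
  define \<theta> where "\<theta> = (1 - c) / (1 - c / 2)"
  have \<theta>: "0 \<le> \<theta>" "\<theta> < 1" using c c_le_1 by (auto simp: \<theta>_def field_simps)
  have "prob (T_gt s i) \<le> \<theta> * prob (T_gt u i)" if i: "1 \<le> i" for i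
  proof -
    have "prob (T_gt s i) \<le> 1 - c" using prob_T_gt_eq[OF i, of s] c(2)[OF i] by simp
    also have "\<dots> = \<theta> * (1 - c / 2)" using c_le_1 by (simp add: \<theta>_def field_simps)
    also have "\<dots> \<le> \<theta> * prob (T_gt u i)"
    proof (intro mult_left_mono \<theta>(1))
      have "1 - exp (- (u * F x0)) \<le> u * F x0" using exp_ge_add_one_self[of "- (u * F x0)"] by simp
      then show "1 - c / 2 \<le> prob (T_gt u i)"
        using prob_T_gt_eq[OF i, of u] prob_Texpl_le_le[OF i less_imp_le[OF u(1)]] u(3) by simp
    qed
    finally show ?thesis .
  qed
  then show thesis using that u(1,2) \<theta> by blast
qed

lemma prob_reach_le:
  assumes A: "3 \<le> A" and v: "0 \<le> v"
  shows "prob {\<omega>\<in>space M. enat x2 \<le> urn_lim tau x0 A 2 \<omega>} \<le>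
    (1 - exp (- v * F x0)) + (\<Prod>i\<in>{3..A}. prob (T_gt v i))"
proof -
  have tau_le: "{\<omega>\<in>space M. tau 2 x0 \<omega> \<le> v} \<in> sets M" using measurable_tau[of 2 x0] by measurable
  have "prob {\<omega>\<in>space M. enat x2 \<le> urn_lim tau x0 A 2 \<omega>} \<le>
      prob ({\<omega>\<in>space M. tau 2 x0 \<omega> \<le> v} \<union> {\<omega>\<in>space M. ennreal v < Smin tau x0 A \<omega>})"
  proof (rule prob_mono_on_pos_paths)
    show "{\<omega>\<in>space M. enat x2 \<le> urn_lim tau x0 A 2 \<omega>} \<in> sets M"
      using x0_less_x2 by (intro sets_urn_lim_ge) auto
    show "{\<omega>\<in>space M. tau 2 x0 \<omega> \<le> v} \<union> {\<omega>\<in>space M. ennreal v < Smin tau x0 A \<omega>} \<in> sets M"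
      using tau_le sets_Smin_greater[OF A] by auto
    show "{\<omega>\<in>space M. enat x2 \<le> urn_lim tau x0 A 2 \<omega>} \<inter> pos_paths \<subseteq>
        {\<omega>\<in>space M. tau 2 x0 \<omega> \<le> v} \<union> {\<omega>\<in>space M. ennreal v < Smin tau x0 A \<omega>}"
    proof clarify
      fix \<omega> assume \<omega>: "\<omega> \<in> space M" "enat x2 \<le> urn_lim tau x0 A 2 \<omega>" "\<omega> \<in> pos_paths"
        and late: "\<not> ennreal v < Smin tau x0 A \<omega>"
      interpret urn_path tau x0 A \<omega> using urn_path_if_pos_paths[OF \<omega>(3)] A by simp
      have less: "ennreal (tau 2 x0 \<omega>) < ennreal v"
        using first_sojourn_less_Smin_if_urn_lim_ge[OF A x0_less_x2 \<omega>(2)] late by simp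
      show "tau 2 x0 \<omega> \<le> v"
      proof (rule ccontr)
        assume "\<not> tau 2 x0 \<omega> \<le> v"
        then have "ennreal v \<le> ennreal (tau 2 x0 \<omega>)" by (intro ennreal_leI) simp
        with less show False by simp
      qed
    qed
  qed
  also have "\<dots> \<le> prob {\<omega>\<in>space M. tau 2 x0 \<omega> \<le> v} + prob {\<omega>\<in>space M. ennreal v < Smin tau x0 A \<omega>}"
    using tau_le sets_Smin_greater[OF A] by (rule measure_Un_le)
  also have "\<dots> = (1 - exp (- v * F x0)) + (\<Prod>i\<in>{3..A}. prob (T_gt v i))"
    using prob_tau_le[of 2 x0 v] v prob_Smin_greater[OF A] by simp
  finally show ?thesis .
qed

lemma prob_reach_tendsto_0: "(\<lambda>A. prob {\<omega>\<in>space M. enat x2 \<le> urn_lim tau x0 A 2 \<omega>}) \<longlonglongrightarrow> 0"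
proof (rule order_tendstoI)
  fix e :: real assume e: "0 < e"
  define v where "v = e / (3 * F x0)"
  have v: "0 < v" "v * F x0 = e / 3" using e rate_pos[of x0] by (auto simp: v_def)
  obtain c where c: "0 < c" "\<And>i. 1 \<le> i \<Longrightarrow> c \<le> prob {\<omega>\<in>space M. Texpl tau x0 i \<omega> \<le> ennreal v}"
    using exists_uniform_prob_Texpl_le[OF v(1)] by blast
  have c_le_1: "c \<le> 1" using c(2)[of 1] prob_le_1 by (meson order.trans order_refl)
  have exponent: "- v * F x0 = - (e / 3)" using v(2) by simp
  have first: "1 - exp (- v * F x0) \<le> e / 3"
    unfolding exponent using exp_ge_add_one_self[of "- (e / 3)"] by linarith
  have rest: "(\<Prod>i\<in>{3..A}. prob (T_gt v i)) \<le> (1 - c) ^ (A - 2)" for A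
    using prod_le_power_mult_prod[of "{3..A}" "\<lambda>i. prob (T_gt v i)" "1 - c" "\<lambda>_. 1"]
      prob_T_gt_eq c(2) by fastforce
  have bound: "prob {\<omega>\<in>space M. enat x2 \<le> urn_lim tau x0 A 2 \<omega>} \<le> e / 3 + (1 - c) ^ (A - 2)"
    if "3 \<le> A" for A
    using prob_reach_le[OF that less_imp_le[OF v(1)]] first rest[of A] by linarith
  have "eventually (\<lambda>A. (1 - c) ^ (A - 2) < e / 3) sequentially"
    using tendsto_power_diff_0[of "1 - c" 2] c c_le_1 e by (intro order_tendstoD(2)) auto
  with eventually_ge_at_top[of 3]
  show "eventually (\<lambda>A. prob {\<omega>\<in>space M. enat x2 \<le> urn_lim tau x0 A 2 \<omega>} < e) sequentially"
  proof eventually_elim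
    case (elim A)
    then show ?case using bound[of A] e by linarith
  qed
qed (auto intro!: always_eventually intro: less_le_trans[OF _ measure_nonneg])

lemma prob_T_gt_K0_pos: "1 \<le> i \<Longrightarrow> 0 < prob (T_gt K0 i)"
  using prob_T_gt_pos[of i K0] s_pos s_less_K0 by simp

lemma prob_Ecal_pos: "3 \<le> A \<Longrightarrow> 0 < prob (Ecal M tau x0 A)"
  using prob_Ecal_ge[of A] mult_pos_pos[OF prob_T_gt_K0_pos[of 1] prob_T_gt_K0_pos[of 2]] by simp

lemma prob_reach_pos: "3 \<le> A \<Longrightarrow> 0 < prob {\<omega>\<in>space M. enat x2 \<le> urn_lim tau x0 A 2 \<omega>}"
proof -
  assume A: "3 \<le> A"
  have "0 < (\<Prod>i\<in>{3..A}. prob (T_gt s i))" using s_pos by (intro prod_pos prob_T_gt_pos) auto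
  then have "0 < prob (T_gt K0 1) * prob (agent_event (early_climb s) 2) * (\<Prod>i\<in>{3..A}. prob (T_gt s i)) / 2"
    using prob_T_gt_K0_pos[of 1] prob_early_climb_pos[OF s_pos] by simp
  also have "\<dots> \<le> prob ({\<omega>\<in>space M. ennreal s < Smin tau x0 A \<omega>} \<inter>
      {\<omega>\<in>space M. enat x2 \<le> urn_lim tau x0 A 2 \<omega>} \<inter> Ecal M tau x0 A)"
    by (rule prob_Smin_gt_reach_Ecal_ge[OF A s_pos order.refl])
  also have "\<dots> \<le> prob {\<omega>\<in>space M. enat x2 \<le> urn_lim tau x0 A 2 \<omega>}"
    using A x0_less_x2 by (intro finite_measure_mono sets_urn_lim_ge) auto
  finally show ?thesis .
qed

lemma PA2_cond_le:
  assumes A: "3 \<le> A" and u: "0 < u" "u \<le> s" and \<theta>: "0 \<le> \<theta>"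
    and ratio: "\<And>i. 1 \<le> i \<Longrightarrow> prob (T_gt s i) \<le> \<theta> * prob (T_gt u i)"
  defines "B \<equiv> \<lambda>a. {\<omega>\<in>space M. ennreal a < Smin tau x0 A \<omega>}"
    and "C \<equiv> {\<omega>\<in>space M. enat x2 \<le> urn_lim tau x0 A 2 \<omega>}"
  shows "PA2_cond M tau x0 A (B s) C
    \<le> \<theta> ^ (A - 2) / (prob (T_gt K0 1) * prob (agent_event (early_climb u) 2) / 2)"
proof -
  define \<kappa> where "\<kappa> = prob (T_gt K0 1) * prob (agent_event (early_climb u) 2) / 2"
  define E where "E = Ecal M tau x0 A"
  define Q where "Q a = (\<Prod>i\<in>{3..A}. prob (T_gt a i))" for a
  have \<kappa>: "0 < \<kappa>" unfolding \<kappa>_def using prob_T_gt_K0_pos[of 1] prob_early_climb_pos[OF u(1)] by simp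
  have sets: "B a \<in> sets M" "C \<in> sets M" "E \<in> sets M" for a
    unfolding B_def C_def E_def using A x0_less_x2 by (auto intro: sets_Smin_greater sets_urn_lim_ge sets_Ecal)
  have Q_u: "0 < Q u" unfolding Q_def using u(1) by (intro prod_pos prob_T_gt_pos) auto
  have "prob (B s \<inter> C \<inter> E) \<le> Q s"
    using finite_measure_mono[of "B s \<inter> C \<inter> E" "B s"] sets prob_Smin_greater[OF A]
    unfolding Q_def B_def by auto
  also have "\<dots> \<le> \<theta> ^ (A - 2) * Q u"
    unfolding Q_def using prod_le_power_mult_prod[of "{3..A}" "\<lambda>i. prob (T_gt s i)" \<theta>] ratio by simp
  finally have BCE: "prob (B s \<inter> C \<inter> E) \<le> \<theta> ^ (A - 2) * Q u" .
  have "\<kappa> * Q u \<le> prob (B u \<inter> C \<inter> E)"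
    using prob_Smin_gt_reach_Ecal_ge[OF A u] unfolding \<kappa>_def Q_def B_def C_def E_def by simp
  also have "\<dots> \<le> prob (C \<inter> E)" using sets by (intro finite_measure_mono) auto
  finally have CE: "\<kappa> * Q u \<le> prob (C \<inter> E)" .
  have "PA2_cond M tau x0 A (B s) C = prob (B s \<inter> C \<inter> E) / prob (C \<inter> E)"
    using PA2_cond_eq[of M tau x0 A "B s" C] prob_Ecal_pos[OF A] unfolding E_def by simp
  also have "\<dots> \<le> (\<theta> ^ (A - 2) * Q u) / (\<kappa> * Q u)"
    using BCE CE \<kappa> Q_u \<theta> by (intro frac_le) simp_all
  also have "\<dots> = \<theta> ^ (A - 2) / \<kappa>" using Q_u by simp
  finally show ?thesis unfolding \<kappa>_def .
qed

lemma PA2_cond_tendsto_0: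
  "(\<lambda>A. PA2_cond M tau x0 A {\<omega>\<in>space M. ennreal s < Smin tau x0 A \<omega>}
                           {\<omega>\<in>space M. enat x2 \<le> urn_lim tau x0 A 2 \<omega>}) \<longlonglongrightarrow> 0"
proof -
  obtain u \<theta> where u: "0 < u" "u \<le> s" and \<theta>: "0 \<le> \<theta>" "\<theta> < 1"
    and ratio: "\<And>i. 1 \<le> i \<Longrightarrow> prob (T_gt s i) \<le> \<theta> * prob (T_gt u i)"
    by (rule exists_uniform_ratio) auto
  define \<kappa> where "\<kappa> = prob (T_gt K0 1) * prob (agent_event (early_climb u) 2) / 2"
  have limit: "(\<lambda>A. \<theta> ^ (A - 2) / \<kappa>) \<longlonglongrightarrow> 0"
    using tendsto_divide_zero[OF tendsto_power_diff_0[OF \<theta>]] .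
  show ?thesis
  proof (rule tendsto_sandwich[OF _ _ tendsto_const limit])
    show "eventually (\<lambda>A. 0 \<le> PA2_cond M tau x0 A {\<omega>\<in>space M. ennreal s < Smin tau x0 A \<omega>}
        {\<omega>\<in>space M. enat x2 \<le> urn_lim tau x0 A 2 \<omega>}) sequentially"
      unfolding PA2_cond_def PA2_def by simp
    show "eventually (\<lambda>A. PA2_cond M tau x0 A {\<omega>\<in>space M. ennreal s < Smin tau x0 A \<omega>}
        {\<omega>\<in>space M. enat x2 \<le> urn_lim tau x0 A 2 \<omega>} \<le> \<theta> ^ (A - 2) / \<kappa>) sequentially"
      using eventually_ge_at_top[of 3] unfolding \<kappa>_def
      by (rule eventually_mono) (rule PA2_cond_le[OF _ u \<theta>(1) ratio])
  qed
qed

lemma PA2_ratio_ge: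
  assumes A: "3 \<le> A"
  defines "B \<equiv> {\<omega>\<in>space M. ennreal s < Smin tau x0 A \<omega>}"
    and "C \<equiv> {\<omega>\<in>space M. enat x2 \<le> urn_lim tau x0 A 2 \<omega>}"
  shows "(prob (T_gt K0 1) * prob (agent_event (early_climb s) 2) / 2) *
      (prob (T_gt K0 1) * prob (T_gt K0 2) / 2) / prob C \<le> PA2_cond M tau x0 A B C / PA2 M tau x0 A B"
proof -
  define \<kappa> where "\<kappa> = prob (T_gt K0 1) * prob (agent_event (early_climb s) 2) / 2"
  define \<epsilon> where "\<epsilon> = prob (T_gt K0 1) * prob (T_gt K0 2) / 2"
  define E where "E = Ecal M tau x0 A"
  define Q where "Q = (\<Prod>i\<in>{3..A}. prob (T_gt s i))"
  have \<kappa>: "0 < \<kappa>" unfolding \<kappa>_def using prob_T_gt_K0_pos prob_early_climb_pos[OF s_pos] by simp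
  have \<epsilon>: "0 < \<epsilon>" unfolding \<epsilon>_def using prob_T_gt_K0_pos by simp
  have sets: "B \<in> sets M" "C \<in> sets M" "E \<in> sets M"
    unfolding B_def C_def E_def using A x0_less_x2 by (auto intro: sets_Smin_greater sets_urn_lim_ge sets_Ecal)
  have Q: "0 < Q" unfolding Q_def using s_pos by (intro prod_pos prob_T_gt_pos) auto
  have BCE: "\<kappa> * Q \<le> prob (B \<inter> C \<inter> E)"
    using prob_Smin_gt_reach_Ecal_ge[OF A s_pos order.refl] unfolding \<kappa>_def Q_def B_def C_def E_def by simp
  have "prob B = Q" unfolding Q_def B_def by (rule prob_Smin_greater[OF A])
  then have BE: "prob (B \<inter> C \<inter> E) \<le> prob (B \<inter> E)" "prob (B \<inter> E) \<le> Q"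
    using sets by (auto intro!: finite_measure_mono)
  have CE: "prob (B \<inter> C \<inter> E) \<le> prob (C \<inter> E)" "prob (C \<inter> E) \<le> prob C"
    using sets by (auto intro!: finite_measure_mono)
  have E: "\<epsilon> \<le> prob E" using prob_Ecal_ge[OF A] unfolding \<epsilon>_def E_def .
  have pos: "0 < prob (B \<inter> C \<inter> E)" "0 < prob (B \<inter> E)" "0 < prob (C \<inter> E)" "0 < prob E"
    using BCE BE CE E \<epsilon> mult_pos_pos[OF \<kappa> Q] by linarith+
  have "\<kappa> * \<epsilon> = (\<kappa> * Q) * \<epsilon> / Q" using Q by simp
  also have "\<dots> \<le> prob (B \<inter> C \<inter> E) * prob E / prob (B \<inter> E)"
    using BCE BE E \<kappa> \<epsilon> Q pos by (intro frac_le mult_mono) auto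
  finally have "\<kappa> * \<epsilon> / prob C \<le> prob (B \<inter> C \<inter> E) * prob E / prob (B \<inter> E) / prob (C \<inter> E)"
    using CE pos \<kappa> \<epsilon> by (intro frac_le) auto
  also have "\<dots> = PA2_cond M tau x0 A B C / PA2 M tau x0 A B"
  proof -
    have cond: "PA2_cond M tau x0 A B C = prob (B \<inter> C \<inter> E) / prob (C \<inter> E)"
      using PA2_cond_eq[of M tau x0 A B C] pos(4) unfolding E_def by simp
    have PA2: "PA2 M tau x0 A B = prob (B \<inter> E) / prob E" unfolding PA2_def E_def ..
    show ?thesis unfolding cond PA2 using pos by (simp add: field_simps)
  qed
  finally show ?thesis unfolding \<kappa>_def \<epsilon>_def .
qed

lemma PA2_ratio_tendsto_at_top:
  "filterlim (\<lambda>A. PA2_cond M tau x0 A {\<omega>\<in>space M. ennreal s < Smin tau x0 A \<omega>}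
                                   {\<omega>\<in>space M. enat x2 \<le> urn_lim tau x0 A 2 \<omega>}
                   / PA2 M tau x0 A {\<omega>\<in>space M. ennreal s < Smin tau x0 A \<omega>})
     at_top sequentially"
proof (rule filterlim_at_top_if_ge_div[OF prob_reach_tendsto_0 _ _
      eventually_mono[OF eventually_ge_at_top PA2_ratio_ge]])
  show "0 < (prob (T_gt K0 1) * prob (agent_event (early_climb s) 2) / 2) *
      (prob (T_gt K0 1) * prob (T_gt K0 2) / 2)"
    using prob_T_gt_K0_pos prob_early_climb_pos[OF s_pos] by simp
  show "eventually (\<lambda>A. 0 < prob {\<omega>\<in>space M. enat x2 \<le> urn_lim tau x0 A 2 \<omega>}) sequentially"
    using eventually_ge_at_top[of 3] by (rule eventually_mono) (rule prob_reach_pos)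
qed

end

theorem proposition4:
  fixes M :: "'a measure" and tau :: "nat \<Rightarrow> nat \<Rightarrow> 'a \<Rightarrow> real"
    and x0 :: nat and F :: "nat \<Rightarrow> real" and s :: real and x2 :: nat
  assumes "prob_space M"
    and "1 \<le> x0"
    and "\<forall>k. 0 < F k"
    and "summable (\<lambda>k. 1 / F k)"
    and "\<forall>i\<ge>1. \<forall>k\<ge>x0. distributed M lborel (tau i k) (exponential_density (F k))"
    and "prob_space.indep_vars M (\<lambda>_. borel) (\<lambda>(i, k). tau i k) {(i, k). 1 \<le> i \<and> x0 \<le> k}"
    and "0 < s"
    and "x0 < x2"
  shows "filterlim (\<lambda>A. PA2_cond M tau x0 A {\<omega>\<in>space M. ennreal s < Smin tau x0 A \<omega>}
                                            {\<omega>\<in>space M. enat x2 \<le> urn_lim tau x0 A 2 \<omega>}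
                        / PA2 M tau x0 A {\<omega>\<in>space M. ennreal s < Smin tau x0 A \<omega>})
           at_top sequentially
       \<and> (\<lambda>A. PA2_cond M tau x0 A {\<omega>\<in>space M. ennreal s < Smin tau x0 A \<omega>}
                                  {\<omega>\<in>space M. enat x2 \<le> urn_lim tau x0 A 2 \<omega>})
           \<longlonglongrightarrow> 0"
proof -
  \<comment> \<open>The hypothesis \<open>1 \<le> x0\<close> only reflects \<open>\<nat> = {1, 2, \<dots>}\<close>; the argument does not use it.\<close>
  have "urn_model M tau x0 F"
    using assms(1,3-6) by (simp add: urn_model_def urn_model_axioms_def)
  then interpret urn_estimates M tau x0 F s x2
    using assms(7,8) by (simp add: urn_estimates_def urn_estimates_axioms_def)
  show ?thesis using PA2_ratio_tendsto_at_top PA2_cond_tendsto_0 ..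
qed

end
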